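(* Let $q$, $r_1,r_2,r_3$, $m_1$ and $V_j^l$ be as in the context, let $c_1,c_2,c_3\in\mathbb{C}$ be non-aligned with $c_1+c_2+c_3=0$, and let $\epsilon_0>0,\alpha_0>0$ be such that for every $\rho$ with $1-\alpha_0\le|\rho|\le1+\alpha_0$ the maps $\phi_j(z)=\rho z+\epsilon_0c_j$ satisfy $\overline{\mathbb{D}}\subset\bigcup_j\phi_j(\mathbb{D})$ and admit open sets $H_1,H_2,H_3$ with $\mathbb{D}=\bigcup_jH_j$, $\overline{\phi_j(H_j)}\subset\mathbb{D}$, $\overline{\phi_j(\frac13H_j)}\subset\frac13\mathbb{D}$ (as produced by the paper's construction). There exist $l_0\ge1$ and $\delta_0>0$ such that if $l\ge l_0$, $\rho\in\mathbb{C}$ satisfies $|\rho|=1-\alpha_0$, and $g$ is a polynomial skew product of the form $g(z,w)=(h(z,w),q^{m_1l}(w))$ with $|h(z,w)-(\rho z+\epsilon_0c_j)|\le\delta_0$ for all $(z,w)\in2\mathbb{D}\times V_j^l$ and $j\in\{1,2,3\}$, then $g$ has a blender of saddle type $$\Lambda_g:=\bigcap_{n\ge0}g^{-n}\Big(\overline{\textstyle\bigcup_{i=1}^3\mathbb{D}\times V_i^l}\Big).$$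
   Context: $q$ is a complex polynomial of degree $d\ge2$; $r_1,r_2,r_3$ distinct repelling periodic points of period $m_1$, multipliers $\chi_i$, not in the postcritical set of $q$. The $V_i^l$ are connected open neighborhoods of $r_i$ with: $q^{m_1}$ maps $V_i^{l+1}$ biholomorphically onto $V_i^l$; diameters decrease exponentially; for $l$ large, $|(q^{lm_1})'|\ge A|\chi_i|^l>1$ on $V_i^l$, $\overline{\bigcup_jV_j^l}\subset q^{lm_1}(V_i^l)$, and $q^{lm_1}$ maps $V_i^l\cap q^{-lm_1}(V_j^l)$ biholomorphically onto $V_j^l$. $\mathbb{D}$ is the unit disc. A polynomial skew product is a polynomial map of this form extending to a holomorphic endomorphism of $\mathbb{P}^2$ (of some degree $D$). Blender of saddle type: for $f\in\mathcal{H}_D(\mathbb{P}^2)$ and open $Z\subset\mathbb{P}^2$ with $\overline Z\subset f(Z)$, if for all $g\in\mathcal{H}_D(\mathbb{P}^2)$ close enough to $f$ the set $\bigcap_{n\ge0}g^{-n}(\overline Z)$ is a hyperbolic set with one stable and one unstable direction (hyperbolicity being defined on the natural extension), then $\bigcap_{n\ge0}f^{-n}(\overline Z)$ is a blender of saddle type. *)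

theory Defs
  imports "HOL-Analysis.Analysis" "HOL-Computational_Algebra.Polynomial"
begin

text \<open>Points of the affine chart C^2 of P^2 (coordinates (z,w)).\<close>
type_synonym pt = "complex \<times> complex"

definition hev :: "nat \<Rightarrow> (nat \<times> nat \<Rightarrow> complex) \<Rightarrow> complex \<Rightarrow> complex \<Rightarrow> complex \<Rightarrow> complex" where
  "hev D a x y t = (\<Sum>(i,j)\<in>(SIGMA i:{..D}. {..D-i}). a (i,j) * x^i * y^j * t^(D-i-j))"

text \<open>A triple (P1,P2,P3) of homogeneous polynomials of degree D (a representative
  of a point in H_D(P^2)).\<close>
type_synonym hmap = "(nat \<times> nat \<Rightarrow> complex) \<times> (nat \<times> nat \<Rightarrow> complex) \<times> (nat \<times> nat \<Rightarrow> complex)"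

definition P1 :: "hmap \<Rightarrow> nat \<times> nat \<Rightarrow> complex" where "P1 F = fst F"
definition P2 :: "hmap \<Rightarrow> nat \<times> nat \<Rightarrow> complex" where "P2 F = fst (snd F)"
definition P3 :: "hmap \<Rightarrow> nat \<times> nat \<Rightarrow> complex" where "P3 F = snd (snd F)"

definition inH :: "nat \<Rightarrow> hmap \<Rightarrow> bool" where
  "inH D F \<longleftrightarrow> D \<ge> 1 \<and> (\<forall>x y t. (x,y,t) \<noteq> (0,0,0) \<longrightarrow>
      (hev D (P1 F) x y t, hev D (P2 F) x y t, hev D (P3 F) x y t) \<noteq> (0,0,0))"

text \<open>Coefficient-closeness of representatives (induces the topology of H_D).\<close>
definition near :: "nat \<Rightarrow> hmap \<Rightarrow> hmap \<Rightarrow> real \<Rightarrow> bool" where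
  "near D F G e \<longleftrightarrow> (\<forall>i j. i + j \<le> D \<longrightarrow>
      cmod (P1 F (i,j) - P1 G (i,j)) < e \<and> cmod (P2 F (i,j) - P2 G (i,j)) < e
      \<and> cmod (P3 F (i,j) - P3 G (i,j)) < e)"

definition den :: "nat \<Rightarrow> hmap \<Rightarrow> pt \<Rightarrow> complex" where
  "den D F p = hev D (P3 F) (fst p) (snd p) 1"

definition aff :: "nat \<Rightarrow> hmap \<Rightarrow> pt \<Rightarrow> pt" where
  "aff D F p = (hev D (P1 F) (fst p) (snd p) 1 / den D F p,
                hev D (P2 F) (fst p) (snd p) 1 / den D F p)"

text \<open>\<open>\<Inter>\<^sub>n f\<^sup>-\<^sup>n(K)\<close> for K contained in the affine chart C^2.\<close>
definition lam :: "nat \<Rightarrow> hmap \<Rightarrow> pt set \<Rightarrow> pt set" where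
  "lam D F K = {p. \<exists>x. x 0 = p \<and> (\<forall>n. x n \<in> K \<and> den D F (x n) \<noteq> 0 \<and> x (Suc n) = aff D F (x n))}"

definition natext :: "nat \<Rightarrow> hmap \<Rightarrow> pt set \<Rightarrow> (nat \<Rightarrow> pt) set" where
  "natext D F L = {xh. (\<forall>k. xh k \<in> L) \<and> (\<forall>k. den D F (xh (Suc k)) \<noteq> 0 \<and> aff D F (xh (Suc k)) = xh k)}"

definition shift :: "nat \<Rightarrow> hmap \<Rightarrow> (nat \<Rightarrow> pt) \<Rightarrow> nat \<Rightarrow> pt" where
  "shift D F xh = (\<lambda>k. case k of 0 \<Rightarrow> aff D F (xh 0) | Suc m \<Rightarrow> xh m)"

definition Df :: "nat \<Rightarrow> hmap \<Rightarrow> pt \<Rightarrow> pt \<Rightarrow> pt" where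
  "Df D F p = frechet_derivative (aff D F) (at p)"

fun Dit :: "nat \<Rightarrow> hmap \<Rightarrow> nat \<Rightarrow> pt \<Rightarrow> pt \<Rightarrow> pt" where
  "Dit D F 0 p v = v"
| "Dit D F (Suc n) p v = Dit D F n (aff D F p) (Df D F p v)"

definition cline :: "pt \<Rightarrow> pt set" where
  "cline v = {(c * fst v, c * snd v) | c. True}"

definition hyp_saddle :: "nat \<Rightarrow> hmap \<Rightarrow> pt set \<Rightarrow> bool" where
  "hyp_saddle D F L \<longleftrightarrow> (\<exists>C lam Es Eu. C > 0 \<and> 0 < lam \<and> lam < 1 \<and>
     (\<forall>xh\<in>natext D F L.
        Es xh \<noteq> 0 \<and> Eu xh \<noteq> 0 \<and>
        fst (Es xh) * snd (Eu xh) - snd (Es xh) * fst (Eu xh) \<noteq> 0 \<and>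
        Df D F (xh 0) ` cline (Es xh) = cline (Es (shift D F xh)) \<and>
        Df D F (xh 0) ` cline (Eu xh) = cline (Eu (shift D F xh)) \<and>
        (\<forall>n v. v \<in> cline (Es xh) \<longrightarrow> norm (Dit D F n (xh 0) v) \<le> C * lam ^ n * norm v) \<and>
        (\<forall>n v. v \<in> cline (Eu xh) \<longrightarrow> norm (Dit D F n (xh 0) v) \<ge> (1 / C) * (1 / lam) ^ n * norm v)))"

definition blender_saddle :: "nat \<Rightarrow> hmap \<Rightarrow> pt set \<Rightarrow> bool" where
  "blender_saddle D F Z \<longleftrightarrow> inH D F \<and> open Z \<and>
     closure Z \<subseteq> aff D F ` {p \<in> Z. den D F p \<noteq> 0} \<and>
     (\<exists>e>0. \<forall>G. inH D G \<and> near D F G e \<longrightarrow> hyp_saddle D G (lam D G (closure Z)))"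

definition postcritical :: "complex poly \<Rightarrow> complex set" where
  "postcritical q = closure {(poly q ^^ n) c | n c. n \<ge> 1 \<and> poly (pderiv q) c = 0}"

end

theory Submission
  imports Defs "HOL-Complex_Analysis.Cauchy_Integral_Formula"
begin

text \<open>Write \<open>g(z, w) = (h(z, w), Q(w))\<close> with \<open>Q = q\<^sup>m\<^sup>1\<^sup>l\<close>. On the closure of
  \<open>Z = \<Union>\<^sub>i ball 0 1 \<times> V\<^sub>i\<close> the Jacobian of \<open>g\<close> is lower triangular, its
  \<open>z\<close>-entry is \<open>2\<delta>\<^sub>0\<close>-close to \<open>\<rho>\<close> by Cauchy's estimate, with \<open>|\<rho>| = 1 - \<alpha>\<^sub>0 < 1\<close>,
  and its \<open>w\<close>-entry is \<open>Q'\<close> with \<open>|Q'| \<ge> A |\<chi>\<^sub>i|\<^sup>l > 1\<close>. For every map close enough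
  to \<open>g\<close> the Jacobian stays close, so a cone around the \<open>w\<close>-axis is mapped into itself and
  expanded, while its complement is contracted. Nested compact families of cones then
  give a stable direction at every point of the maximal invariant set (forward iterates
  stay in the stable cone) and an unstable direction along every prehistory (backward
  iterates stay in the unstable cone). Finally \<open>closure Z \<subseteq> g(Z)\<close>: the three affine maps
  cover the closed disc with a uniform margin, so Brouwer's fixed point theorem solves
  \<open>h(z, w) = z'\<close>, and \<open>Q\<close> maps each \<open>V\<^sub>i\<close> over the closure of \<open>\<Union>\<^sub>j V\<^sub>j\<close>.\<close>

section \<open>Complex lines and cones in \<open>\<complex>\<^sup>2\<close>\<close>

abbreviation det2 :: "pt \<Rightarrow> pt \<Rightarrow> complex" where
  "det2 v w \<equiv> fst v * snd w - snd v * fst w"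

definition cmul :: "complex \<Rightarrow> pt \<Rightarrow> pt" where
  "cmul t v = (t * fst v, t * snd v)"

lemma norm_cmul: "norm (cmul t v) = cmod t * norm v"
proof -
  have "norm (cmul t v) = sqrt ((cmod t)\<^sup>2 * ((cmod (fst v))\<^sup>2 + (cmod (snd v))\<^sup>2))"
    by (simp add: cmul_def norm_Pair norm_mult power_mult_distrib algebra_simps)
  also have "\<dots> = cmod t * norm v"
    by (simp add: real_sqrt_mult norm_Pair[of "fst v" "snd v", simplified])
  finally show ?thesis .
qed

lemma norm_pt_le: "norm (v::pt) \<le> cmod (fst v) + cmod (snd v)"
  by (metis norm_Pair_le prod.collapse)

lemma norm_fst_pt_le: "cmod (fst (v::pt)) \<le> norm v"
  by (metis norm_fst_le prod.collapse)

lemma norm_snd_pt_le: "cmod (snd (v::pt)) \<le> norm v"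
  by (metis norm_snd_le prod.collapse)

lemma cline_eq_range_cmul: "cline v = range (\<lambda>t. cmul t v)"
  by (auto simp: cline_def cmul_def)

lemma cmul_cmul: "cmul e (cmul t v) = cmul (e * t) v"
  by (simp add: cmul_def)

lemma cline_cmul:
  assumes "t \<noteq> 0"
  shows "cline (cmul t v) = cline v"
  unfolding cline_eq_range_cmul
proof (intro subset_antisym subsetI)
  fix x assume "x \<in> range (\<lambda>e. cmul e (cmul t v))"
  then obtain e where "x = cmul e (cmul t v)"
    by blast
  then show "x \<in> range (\<lambda>e. cmul e v)"
    by (simp add: cmul_cmul)
next
  fix x assume "x \<in> range (\<lambda>e. cmul e v)"
  then obtain e where "x = cmul e v"
    by blast
  with assms have "x = cmul (e / t) (cmul t v)"
    by (simp add: cmul_cmul)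
  then show "x \<in> range (\<lambda>e. cmul e (cmul t v))"
    by blast
qed

lemma cmul_if_det2_eq_0:
  assumes "v \<noteq> 0" "det2 v w = 0"
  shows "\<exists>t. w = cmul t v"
proof (cases "fst v = 0")
  case True
  then have "snd v \<noteq> 0" "fst w = 0"
    using assms by (auto simp: prod_eq_iff)
  with True show ?thesis
    by (intro exI[of _ "snd w / snd v"]) (auto simp: cmul_def prod_eq_iff)
next
  case False
  then have "snd w = fst w / fst v * snd v"
    using assms(2) by (simp add: field_simps)
  with False show ?thesis
    by (intro exI[of _ "fst w / fst v"]) (auto simp: cmul_def prod_eq_iff)
qed

lemma cline_eq_if_det2_eq_0:
  assumes "v \<noteq> 0" "w \<noteq> 0" "det2 v w = 0"
  shows "cline v = cline w"
proof -
  obtain t where t: "w = cmul t v"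
    using cmul_if_det2_eq_0 assms by blast
  with assms(2) have "t \<noteq> 0"
    by (auto simp: cmul_def zero_prod_def)
  with t show ?thesis
    by (simp add: cline_cmul)
qed

lemma cmul_combination_if_det2_ne_0:
  assumes "det2 v w \<noteq> 0"
  shows "e = cmul ((fst e * snd w - snd e * fst w) / det2 v w) v
           + cmul ((fst v * snd e - snd v * fst e) / det2 v w) w" (is "e = cmul (?A / _) v + cmul (?B / _) w")
proof (rule prod_eqI)
  have "fst (cmul (?A / det2 v w) v + cmul (?B / det2 v w) w) = (?A * fst v + ?B * fst w) / det2 v w"
    by (simp add: cmul_def add_divide_distrib)
  also have "?A * fst v + ?B * fst w = fst e * det2 v w"
    by (simp add: algebra_simps)
  finally show "fst e = fst (cmul (?A / det2 v w) v + cmul (?B / det2 v w) w)"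
    using assms by simp
  have "snd (cmul (?A / det2 v w) v + cmul (?B / det2 v w) w) = (?A * snd v + ?B * snd w) / det2 v w"
    by (simp add: cmul_def add_divide_distrib)
  also have "?A * snd v + ?B * snd w = snd e * det2 v w"
    by (simp add: algebra_simps)
  finally show "snd e = snd (cmul (?A / det2 v w) v + cmul (?B / det2 v w) w)"
    using assms by simp
qed

lemma matrix2_inverse:
  fixes a b c d x y :: complex
  assumes "a * d - b * c \<noteq> 0"
  shows "a * ((d * x - b * y) / (a * d - b * c)) + b * ((a * y - c * x) / (a * d - b * c)) = x"
    and "c * ((d * x - b * y) / (a * d - b * c)) + d * ((a * y - c * x) / (a * d - b * c)) = y"
    and "(d * (a * x + b * y) - b * (c * x + d * y)) / (a * d - b * c) = x"
    and "(a * (c * x + d * y) - c * (a * x + b * y)) / (a * d - b * c) = y"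
proof -
  have "a * (d * x - b * y) + b * (a * y - c * x) = (a * d - b * c) * x"
       "c * (d * x - b * y) + d * (a * y - c * x) = (a * d - b * c) * y"
       "d * (a * x + b * y) - b * (c * x + d * y) = (a * d - b * c) * x"
       "a * (c * x + d * y) - c * (a * x + b * y) = (a * d - b * c) * y"
    by (simp_all add: algebra_simps)
  with assms show "a * ((d * x - b * y) / (a * d - b * c)) + b * ((a * y - c * x) / (a * d - b * c)) = x"
    "c * ((d * x - b * y) / (a * d - b * c)) + d * ((a * y - c * x) / (a * d - b * c)) = y"
    "(d * (a * x + b * y) - b * (c * x + d * y)) / (a * d - b * c) = x"
    "(a * (c * x + d * y) - c * (a * x + b * y)) / (a * d - b * c) = y"
    by (simp_all add: times_divide_eq_right add_divide_distrib[symmetric])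
qed

definition clinear2 :: "(pt \<Rightarrow> pt) \<Rightarrow> bool" where
  "clinear2 L \<longleftrightarrow> (\<forall>u v. L (u + v) = L u + L v) \<and> (\<forall>t v. L (cmul t v) = cmul t (L v))"

lemma clinear2_add: "clinear2 L \<Longrightarrow> L (u + v) = L u + L v"
  and clinear2_cmul: "clinear2 L \<Longrightarrow> L (cmul t v) = cmul t (L v)"
  unfolding clinear2_def by blast+

lemma clinear2_zero: "clinear2 L \<Longrightarrow> L 0 = 0"
  using clinear2_cmul[of L 0 0] by (simp add: cmul_def zero_prod_def)

lemma clinear2_id: "clinear2 (\<lambda>v. v)"
  by (simp add: clinear2_def)

lemma clinear2_comp: "clinear2 L \<Longrightarrow> clinear2 L' \<Longrightarrow> clinear2 (\<lambda>v. L' (L v))"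
  unfolding clinear2_def by metis

lemma clinear2_matrix: "clinear2 (\<lambda>v. (a * fst v + b * snd v, c * fst v + d * snd v))"
  by (simp add: clinear2_def cmul_def algebra_simps)

lemma clinear2_isCont:
  assumes "clinear2 L"
  shows "isCont L v"
proof -
  have "scaleR r u = cmul (of_real r) u" for r and u :: pt
    by (simp add: cmul_def scaleR_conv_of_real prod_eq_iff)
  then have "linear L"
    using assms by (intro linearI) (simp_all add: clinear2_add clinear2_cmul)
  then show ?thesis
    by (simp add: linear_continuous_at linear_conv_bounded_linear)
qed

lemma clinear2_image_cline: "clinear2 L \<Longrightarrow> L ` cline v = cline (L v)"
  by (simp add: cline_eq_range_cmul image_image clinear2_cmul)

text \<open>Two independent vectors span \<open>\<complex>\<^sup>2\<close>, so a sequence of linear maps that stays bounded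
  on both is bounded everywhere.\<close>
lemma det2_eq_0_if_bounded:
  assumes lin: "\<And>n. clinear2 (L n)"
    and bv: "\<And>n. norm (L n v) \<le> B" and bw: "\<And>n. norm (L n w) \<le> B"
    and unbounded: "\<And>C. \<exists>n. C < norm (L n e)"
  shows "det2 v w = 0"
proof (rule ccontr)
  assume "det2 v w \<noteq> 0"
  then obtain \<alpha> \<beta> where e: "e = cmul \<alpha> v + cmul \<beta> w"
    using cmul_combination_if_det2_ne_0 by blast
  have bound: "norm (L n e) \<le> cmod \<alpha> * B + cmod \<beta> * B" for n
  proof -
    have "norm (L n e) = norm (cmul \<alpha> (L n v) + cmul \<beta> (L n w))"
      by (simp add: e clinear2_add[OF lin] clinear2_cmul[OF lin])
    also have "\<dots> \<le> cmod \<alpha> * norm (L n v) + cmod \<beta> * norm (L n w)"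
      by (metis norm_cmul norm_triangle_ineq)
    also have "\<dots> \<le> cmod \<alpha> * B + cmod \<beta> * B"
      by (intro add_mono mult_left_mono bv bw) auto
    finally show ?thesis .
  qed
  obtain n where "cmod \<alpha> * B + cmod \<beta> * B < norm (L n e)"
    using unbounded by blast
  with bound[of n] show False
    by linarith
qed

lemma nonzero_in_nested_cones:
  fixes C :: "nat \<Rightarrow> pt set"
  assumes closed: "\<And>n. closed (C n)" and decr: "\<And>m n. m \<le> n \<Longrightarrow> C n \<subseteq> C m"
    and nonzero: "\<And>n. \<exists>v\<in>C n. v \<noteq> 0" and cone: "\<And>n t v. v \<in> C n \<Longrightarrow> cmul t v \<in> C n"
  shows "\<exists>v. v \<noteq> 0 \<and> (\<forall>n. v \<in> C n)"
proof -
  have nonempty: "sphere 0 1 \<inter> C n \<noteq> {}" for n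
  proof -
    obtain v where v: "v \<in> C n" "v \<noteq> 0"
      using nonzero by blast
    then have "cmul (1 / norm v) v \<in> sphere 0 1 \<inter> C n"
      using cone[of v n] by (simp add: norm_cmul norm_divide)
    then show ?thesis
      by blast
  qed
  have "\<Inter> (range (\<lambda>n. sphere 0 1 \<inter> C n)) \<noteq> {}"
  proof (rule compact_nest)
    show "compact (sphere 0 1 \<inter> C n)" for n
      using closed by (intro compact_Int_closed compact_sphere)
    show "sphere 0 1 \<inter> C n \<noteq> {}" for n
      by (rule nonempty)
    show "sphere 0 1 \<inter> C n \<subseteq> sphere 0 1 \<inter> C m" if "m \<le> n" for m n
      using decr[OF that] by blast
  qed
  then obtain v where "v \<in> sphere 0 1" "\<And>n. v \<in> C n"
    by blast
  then show ?thesis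
    by (intro exI[of _ v]) auto
qed

definition ucone :: "real \<Rightarrow> pt set" where
  "ucone K = {v. cmod (fst v) \<le> K * cmod (snd v)}"

definition scone :: "real \<Rightarrow> pt set" where
  "scone K = {v. K * cmod (snd v) \<le> cmod (fst v)}"

lemma cmul_in_ucone:
  assumes "v \<in> ucone K"
  shows "cmul t v \<in> ucone K"
proof -
  have "cmod t * cmod (fst v) \<le> cmod t * (K * cmod (snd v))"
    using assms by (simp add: ucone_def mult_left_mono)
  then show ?thesis
    by (simp add: ucone_def cmul_def norm_mult mult.left_commute)
qed

lemma cmul_in_scone:
  assumes "v \<in> scone K"
  shows "cmul t v \<in> scone K"
proof -
  have "cmod t * (K * cmod (snd v)) \<le> cmod t * cmod (fst v)"
    using assms by (simp add: scone_def mult_left_mono)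
  then show ?thesis
    by (simp add: scone_def cmul_def norm_mult mult.left_commute)
qed

lemma closed_ucone: "closed (ucone K)"
  and closed_scone: "closed (scone K)"
  unfolding ucone_def scone_def by (intro closed_Collect_le continuous_intros)+

lemma scone_Int_ucone:
  assumes "K' < K" "v \<in> scone K" "v \<in> ucone K'"
  shows "v = 0"
proof -
  have "K * cmod (snd v) \<le> K' * cmod (snd v)"
    using assms by (auto simp: scone_def ucone_def)
  with assms(1) have "snd v = 0"
    by (auto simp: mult_le_cancel_right)
  with assms(3) show ?thesis
    by (simp add: ucone_def prod_eq_iff)
qed

lemma norm_le_of_ucone: "v \<in> ucone K \<Longrightarrow> norm v \<le> (K + 1) * cmod (snd v)"
  using norm_pt_le[of v] by (simp add: ucone_def algebra_simps)

lemma norm_le_of_scone: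
  assumes "0 < K" "v \<in> scone K"
  shows "norm v \<le> (1 + 1 / K) * cmod (fst v)"
proof -
  have "cmod (snd v) \<le> cmod (fst v) / K"
    using assms by (simp add: scone_def field_simps)
  then show ?thesis
    using norm_pt_le[of v] by (simp add: algebra_simps)
qed

section \<open>Hyperbolicity from an invariant cone field\<close>

locale cone_field =
  fixes D :: nat and G :: hmap and T :: "pt set"
    and a b c d :: "pt \<Rightarrow> complex" and s M \<eta> K m :: real
  assumes aff_mem: "\<And>p. p \<in> T \<Longrightarrow> aff D G p \<in> T"
    and den_nonzero: "\<And>p. p \<in> T \<Longrightarrow> den D G p \<noteq> 0"
    and Df_eq_matrix: "\<And>p. p \<in> T \<Longrightarrow>
          Df D G p = (\<lambda>v. (a p * fst v + b p * snd v, c p * fst v + d p * snd v))"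
    and norm_a: "\<And>p. p \<in> T \<Longrightarrow> cmod (a p) \<le> s"
    and norm_b: "\<And>p. p \<in> T \<Longrightarrow> cmod (b p) \<le> M"
    and norm_c: "\<And>p. p \<in> T \<Longrightarrow> cmod (c p) \<le> \<eta>"
    and norm_d: "\<And>p. p \<in> T \<Longrightarrow> m \<le> cmod (d p)"
    and det_nonzero: "\<And>p. p \<in> T \<Longrightarrow> a p * d p - b p * c p \<noteq> 0"
    and nonneg: "0 \<le> s" "0 \<le> M" "0 \<le> \<eta>" and K_pos: "0 < K"
    and contracting: "s + M / K < 1" and expanding: "1 < m - \<eta> * K"
begin

abbreviation f :: "pt \<Rightarrow> pt" where
  "f \<equiv> aff D G"

definition \<kappa> :: real where
  "\<kappa> = s + M / K"

definition \<sigma> :: real where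
  "\<sigma> = m - \<eta> * K"

lemma \<kappa>_nonneg: "0 \<le> \<kappa>"
  using nonneg K_pos by (simp add: \<kappa>_def)

lemma \<kappa>_less_1: "\<kappa> < 1"
  using contracting by (simp add: \<kappa>_def)

lemma \<sigma>_gt_1: "1 < \<sigma>"
  using expanding by (simp add: \<sigma>_def)

definition Df_inv :: "pt \<Rightarrow> pt \<Rightarrow> pt" where
  "Df_inv p w = ((d p * fst w - b p * snd w) / (a p * d p - b p * c p),
                 (a p * snd w - c p * fst w) / (a p * d p - b p * c p))"

lemma Df_Df_inv: "p \<in> T \<Longrightarrow> Df D G p (Df_inv p w) = w"
  and Df_inv_Df: "p \<in> T \<Longrightarrow> Df_inv p (Df D G p w) = w"
  using matrix2_inverse[OF det_nonzero[of p]] by (simp_all add: Df_eq_matrix Df_inv_def prod_eq_iff)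

lemma clinear2_Df: "p \<in> T \<Longrightarrow> clinear2 (Df D G p)"
  by (simp add: Df_eq_matrix clinear2_matrix)

lemma clinear2_Df_inv: "clinear2 (Df_inv p)"
proof -
  define \<delta> where "\<delta> = a p * d p - b p * c p"
  have "Df_inv p = (\<lambda>w. (d p / \<delta> * fst w + - b p / \<delta> * snd w, - c p / \<delta> * fst w + a p / \<delta> * snd w))"
    by (auto simp: Df_inv_def \<delta>_def diff_divide_distrib)
  then show ?thesis
    by (simp only: clinear2_matrix)
qed

lemma Df_nonzero:
  assumes "p \<in> T" "v \<noteq> 0"
  shows "Df D G p v \<noteq> 0"
proof
  assume "Df D G p v = 0"
  then have "v = Df_inv p 0"
    using Df_inv_Df[OF assms(1)] by metis
  with assms(2) show False
    using clinear2_zero[OF clinear2_Df_inv] by simp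
qed

lemma iter_mem: "p \<in> T \<Longrightarrow> (f ^^ n) p \<in> T"
  by (induction n) (auto intro: aff_mem)

lemma Dit_add: "Dit D G (k + j) p v = Dit D G j ((f ^^ k) p) (Dit D G k p v)"
proof (induction k arbitrary: p v)
  case (Suc k)
  have "Dit D G (Suc k + j) p v = Dit D G (k + j) (f p) (Df D G p v)"
    by simp
  also have "\<dots> = Dit D G j ((f ^^ Suc k) p) (Dit D G (Suc k) p v)"
    by (simp add: Suc.IH funpow_Suc_right del: funpow.simps)
  finally show ?case .
qed simp

lemma Dit_Suc_right: "Dit D G (Suc n) p v = Df D G ((f ^^ n) p) (Dit D G n p v)"
  using Dit_add[of n 1] by simp

lemma clinear2_Dit: "p \<in> T \<Longrightarrow> clinear2 (Dit D G n p)"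
proof (induction n arbitrary: p)
  case 0
  then show ?case
    by (simp add: clinear2_id)
next
  case (Suc n)
  then show ?case
    using clinear2_comp[OF clinear2_Df Suc.IH] aff_mem by simp
qed

lemma Dit_surj: "p \<in> T \<Longrightarrow> \<exists>u. Dit D G n p u = w"
proof (induction n arbitrary: p w)
  case (Suc n)
  then obtain u where "Dit D G n (f p) u = w"
    using aff_mem by blast
  with Suc.prems show ?case
    by (intro exI[of _ "Df_inv p u"]) (simp add: Df_Df_inv)
qed auto

lemma Df_ucone:
  assumes p: "p \<in> T" and v: "v \<in> ucone K"
  shows "\<sigma> * cmod (snd v) \<le> cmod (snd (Df D G p v))"
    and "cmod (fst (Df D G p v)) \<le> K * \<kappa> * cmod (snd v)"
proof -
  have v': "cmod (fst v) \<le> K * cmod (snd v)"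
    using v by (simp add: ucone_def)
  have "cmod (d p) * cmod (snd v) - cmod (c p) * cmod (fst v) \<le> cmod (snd (Df D G p v))"
    using norm_diff_ineq[of "d p * snd v" "c p * fst v"]
    by (simp add: Df_eq_matrix p norm_mult add.commute)
  moreover have "cmod (c p) * cmod (fst v) \<le> \<eta> * (K * cmod (snd v))"
    using norm_c[OF p] v' nonneg by (intro mult_mono) auto
  moreover have "m * cmod (snd v) \<le> cmod (d p) * cmod (snd v)"
    using norm_d[OF p] by (intro mult_right_mono) auto
  ultimately show "\<sigma> * cmod (snd v) \<le> cmod (snd (Df D G p v))"
    by (simp add: \<sigma>_def algebra_simps)
  have "cmod (fst (Df D G p v)) \<le> cmod (a p) * cmod (fst v) + cmod (b p) * cmod (snd v)"
    using norm_triangle_ineq[of "a p * fst v" "b p * snd v"] by (simp add: Df_eq_matrix p norm_mult)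
  also have "\<dots> \<le> s * (K * cmod (snd v)) + M * cmod (snd v)"
    using norm_a[OF p] norm_b[OF p] v' nonneg by (intro add_mono mult_mono) auto
  also have "\<dots> = K * \<kappa> * cmod (snd v)"
    using K_pos by (simp add: \<kappa>_def field_simps)
  finally show "cmod (fst (Df D G p v)) \<le> K * \<kappa> * cmod (snd v)" .
qed

lemma Df_ucone_narrow:
  assumes "p \<in> T" "v \<in> ucone K"
  shows "Df D G p v \<in> ucone (K * (\<kappa> / \<sigma>))"
proof -
  have "K * \<kappa> * cmod (snd v) = K * (\<kappa> / \<sigma>) * (\<sigma> * cmod (snd v))"
    using \<sigma>_gt_1 by simp
  also have "\<dots> \<le> K * (\<kappa> / \<sigma>) * cmod (snd (Df D G p v))"
    using Df_ucone(1)[OF assms] K_pos \<kappa>_nonneg \<sigma>_gt_1 by (intro mult_left_mono) auto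
  finally show ?thesis
    using Df_ucone(2)[OF assms] by (simp add: ucone_def)
qed

lemma Df_ucone_mem:
  assumes "p \<in> T" "v \<in> ucone K"
  shows "Df D G p v \<in> ucone K"
proof -
  have "\<kappa> / \<sigma> \<le> 1"
    using \<kappa>_less_1 \<sigma>_gt_1 by (simp add: field_simps)
  then have "K * (\<kappa> / \<sigma>) * cmod (snd (Df D G p v)) \<le> K * cmod (snd (Df D G p v))"
    using K_pos by (intro mult_right_mono mult_left_le) auto
  then show ?thesis
    using Df_ucone_narrow[OF assms] by (simp add: ucone_def)
qed

lemma Df_scone:
  assumes p: "p \<in> T" and v: "v \<in> scone K"
  shows "cmod (fst (Df D G p v)) \<le> \<kappa> * cmod (fst v)"
proof -
  have "cmod (fst (Df D G p v)) \<le> cmod (a p) * cmod (fst v) + cmod (b p) * cmod (snd v)"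
    using norm_triangle_ineq[of "a p * fst v" "b p * snd v"] by (simp add: Df_eq_matrix p norm_mult)
  also have "\<dots> \<le> s * cmod (fst v) + M * (cmod (fst v) / K)"
    using norm_a[OF p] norm_b[OF p] v nonneg K_pos
    by (intro add_mono mult_mono) (auto simp: scone_def field_simps)
  also have "\<dots> = \<kappa> * cmod (fst v)"
    by (simp add: \<kappa>_def field_simps)
  finally show ?thesis .
qed

text \<open>A vector \<open>v\<close> outside the stable cone has \<open>snd v \<noteq> 0\<close>; its image has first coordinate
  at most \<open>K \<kappa> |snd v|\<close> and second coordinate at least \<open>\<sigma> |snd v|\<close>, so it stays outside.\<close>
lemma scone_of_Df_scone:
  assumes p: "p \<in> T" and Dv: "Df D G p v \<in> scone K"
  shows "v \<in> scone K"
proof (rule ccontr)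
  assume "v \<notin> scone K"
  then have v: "cmod (fst v) < K * cmod (snd v)"
    by (simp add: scone_def)
  then have "0 < K * cmod (snd v)"
    using norm_ge_zero[of "fst v"] by linarith
  then have pos: "0 < cmod (snd v)"
    using K_pos by (simp add: zero_less_mult_iff)
  have "cmod (fst (Df D G p v)) \<le> K * \<kappa> * cmod (snd v)"
    using Df_ucone(2)[OF p] v by (simp add: ucone_def)
  also have "\<dots> < K * \<sigma> * cmod (snd v)"
    using pos K_pos \<kappa>_less_1 \<sigma>_gt_1 by (intro mult_strict_right_mono mult_strict_left_mono) auto
  also have "\<dots> \<le> K * cmod (snd (Df D G p v))"
    using Df_ucone(1)[OF p] v K_pos by (simp add: ucone_def mult.assoc)
  finally show False
    using Dv by (simp add: scone_def)
qed

lemma Dit_ucone: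
  assumes "p \<in> T" "v \<in> ucone K"
  shows "Dit D G n p v \<in> ucone K \<and> \<sigma> ^ n * cmod (snd v) \<le> cmod (snd (Dit D G n p v))"
  using assms
proof (induction n arbitrary: p v)
  case (Suc n)
  have IH: "Dit D G n (f p) (Df D G p v) \<in> ucone K \<and>
      \<sigma> ^ n * cmod (snd (Df D G p v)) \<le> cmod (snd (Dit D G n (f p) (Df D G p v)))"
    using Suc.IH[OF aff_mem Df_ucone_mem] Suc.prems by blast
  have "\<sigma> ^ Suc n * cmod (snd v) = \<sigma> ^ n * (\<sigma> * cmod (snd v))"
    by simp
  also have "\<dots> \<le> \<sigma> ^ n * cmod (snd (Df D G p v))"
    using Df_ucone(1)[OF Suc.prems] \<sigma>_gt_1 by (intro mult_left_mono) auto
  finally show ?case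
    using IH by simp
qed simp

lemma scone_of_Dit_scone: "p \<in> T \<Longrightarrow> Dit D G n p v \<in> scone K \<Longrightarrow> v \<in> scone K"
proof (induction n arbitrary: p v)
  case (Suc n)
  have "Dit D G n (f p) (Df D G p v) \<in> scone K"
    using Suc.prems(2) by simp
  then have "Df D G p v \<in> scone K"
    by (rule Suc.IH[OF aff_mem[OF Suc.prems(1)]])
  with Suc.prems(1) show ?case
    by (rule scone_of_Df_scone)
qed simp

definition stable :: "pt \<Rightarrow> pt \<Rightarrow> bool" where
  "stable p v \<longleftrightarrow> (\<forall>n. Dit D G n p v \<in> scone K)"

lemma stable_Df: "stable p v \<Longrightarrow> stable (f p) (Df D G p v)"
  unfolding stable_def by (metis Dit.simps(2))

lemma stable_cmul: "p \<in> T \<Longrightarrow> stable p v \<Longrightarrow> stable p (cmul t v)"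
  by (simp add: stable_def clinear2_cmul[OF clinear2_Dit] cmul_in_scone)

lemma stable_fst_le:
  assumes "p \<in> T" "stable p v"
  shows "cmod (fst (Dit D G n p v)) \<le> \<kappa> ^ n * cmod (fst v)"
  using assms
proof (induction n arbitrary: p v)
  case (Suc n)
  have "v \<in> scone K"
    using Suc.prems(2) Dit.simps(1) unfolding stable_def by metis
  have "cmod (fst (Dit D G (Suc n) p v)) = cmod (fst (Dit D G n (f p) (Df D G p v)))"
    by simp
  also have "\<dots> \<le> \<kappa> ^ n * cmod (fst (Df D G p v))"
    using Suc.IH[OF aff_mem[OF Suc.prems(1)] stable_Df[OF Suc.prems(2)]] .
  also have "\<dots> \<le> \<kappa> ^ n * (\<kappa> * cmod (fst v))"
    using Df_scone[OF Suc.prems(1) \<open>v \<in> scone K\<close>] \<kappa>_nonneg by (intro mult_left_mono) auto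
  finally show ?case
    by (simp add: mult_ac)
qed simp

lemma stable_norm_le:
  assumes "p \<in> T" "stable p v"
  shows "norm (Dit D G n p v) \<le> (1 + 1 / K) * \<kappa> ^ n * norm v"
proof -
  have "norm (Dit D G n p v) \<le> (1 + 1 / K) * cmod (fst (Dit D G n p v))"
    using assms(2) K_pos by (simp add: stable_def norm_le_of_scone)
  also have "\<dots> \<le> (1 + 1 / K) * (\<kappa> ^ n * cmod (fst v))"
    using stable_fst_le[OF assms] K_pos by (intro mult_left_mono) auto
  also have "\<dots> \<le> (1 + 1 / K) * (\<kappa> ^ n * norm v)"
    using norm_fst_pt_le[of v] \<kappa>_nonneg K_pos by (intro mult_left_mono) auto
  finally show ?thesis
    by (simp add: mult.assoc)
qed

text \<open>The vectors whose first \<open>n\<close> images lie in the stable cone form nested closed cones,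
  nonempty since they contain the preimage of \<open>(1, 0)\<close> under \<open>Dit D G n p\<close>.\<close>
lemma stable_exists:
  assumes p: "p \<in> T"
  shows "\<exists>v. v \<noteq> 0 \<and> stable p v"
proof -
  define C where "C n = {v. \<forall>k\<le>n. Dit D G k p v \<in> scone K}" for n
  have "\<exists>v. v \<noteq> 0 \<and> (\<forall>n. v \<in> C n)"
  proof (rule nonzero_in_nested_cones)
    show "closed (C n)" for n
    proof -
      have "C n = (\<Inter>k\<in>{..n}. Dit D G k p -` scone K)"
        by (auto simp: C_def)
      then show ?thesis
        using clinear2_isCont[OF clinear2_Dit[OF p]]
        by (simp add: closed_INT continuous_closed_vimage closed_scone)
    qed
    show "C n \<subseteq> C m" if "m \<le> n" for m n
      using that by (auto simp: C_def)
    show "cmul t v \<in> C n" if "v \<in> C n" for n t v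
      using that by (simp add: C_def clinear2_cmul[OF clinear2_Dit[OF p]] cmul_in_scone)
    show "\<exists>v\<in>C n. v \<noteq> 0" for n
    proof -
      obtain u where u: "Dit D G n p u = (1, 0)"
        using Dit_surj[OF p] by blast
      have "Dit D G k p u \<in> scone K" if "k \<le> n" for k
      proof -
        have "Dit D G (n - k) ((f ^^ k) p) (Dit D G k p u) = (1, 0)"
          using Dit_add[of k "n - k" p u] u that by simp
        then have "Dit D G (n - k) ((f ^^ k) p) (Dit D G k p u) \<in> scone K"
          by (simp add: scone_def)
        then show ?thesis
          by (rule scone_of_Dit_scone[OF iter_mem[OF p]])
      qed
      moreover have "u \<noteq> 0"
        using u clinear2_zero[OF clinear2_Dit[OF p]] by (auto simp: zero_prod_def)
      ultimately show ?thesis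
        by (intro bexI[of _ u]) (auto simp: C_def)
    qed
  qed
  then show ?thesis
    by (auto simp: C_def stable_def)
qed

text \<open>Stable vectors stay bounded while \<open>(0, 1)\<close>, which lies in the unstable cone, is
  expanded: hence there is only one stable direction.\<close>
lemma stable_det2_eq_0:
  assumes p: "p \<in> T" and v: "stable p v" and w: "stable p w"
  shows "det2 v w = 0"
proof (rule det2_eq_0_if_bounded[where L = "\<lambda>n. Dit D G n p" and e = "(0, 1)"])
  show "clinear2 (Dit D G n p)" for n
    by (rule clinear2_Dit[OF p])
  have bound: "norm (Dit D G n p u) \<le> (1 + 1 / K) * norm u" if "stable p u" for n u
  proof -
    have "(1 + 1 / K) * \<kappa> ^ n * norm u \<le> (1 + 1 / K) * 1 * norm u"
      using K_pos \<kappa>_nonneg \<kappa>_less_1 by (intro mult_right_mono mult_left_mono power_le_one) auto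
    then show ?thesis
      using stable_norm_le[OF p that, of n] by simp
  qed
  have le_sum: "(1 + 1 / K) * norm u \<le> (1 + 1 / K) * (norm v + norm w)" if "u = v \<or> u = w" for u
    using that K_pos by (intro mult_left_mono) auto
  show "norm (Dit D G n p v) \<le> (1 + 1 / K) * (norm v + norm w)" for n
    using order_trans[OF bound[OF v] le_sum] by blast
  show "norm (Dit D G n p w) \<le> (1 + 1 / K) * (norm v + norm w)" for n
    using order_trans[OF bound[OF w] le_sum] by blast
  show "\<exists>n. B < norm (Dit D G n p (0, 1))" for B
  proof -
    obtain n where "B < \<sigma> ^ n"
      using real_arch_pow[OF \<sigma>_gt_1] by blast
    moreover have "\<sigma> ^ n \<le> cmod (snd (Dit D G n p (0, 1)))"
      using Dit_ucone[OF p, of "(0, 1)" n] K_pos by (simp add: ucone_def)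
    ultimately show ?thesis
      using norm_snd_pt_le by (meson less_le_trans)
  qed
qed

primrec Dback :: "(nat \<Rightarrow> pt) \<Rightarrow> nat \<Rightarrow> pt \<Rightarrow> pt" where
  "Dback xh 0 v = v"
| "Dback xh (Suc k) v = Df_inv (xh (Suc k)) (Dback xh k v)"

lemma natext_mem: "xh \<in> natext D G T \<Longrightarrow> xh k \<in> T"
  and natext_aff: "xh \<in> natext D G T \<Longrightarrow> f (xh (Suc k)) = xh k"
  by (simp_all add: natext_def)

lemma Df_Dback: "xh \<in> natext D G T \<Longrightarrow> Df D G (xh (Suc k)) (Dback xh (Suc k) v) = Dback xh k v"
  by (simp add: Df_Df_inv natext_mem)

lemma clinear2_Dback: "clinear2 (Dback xh k)"
proof (induction k)
  case 0
  then show ?case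
    by (simp add: clinear2_id)
next
  case (Suc k)
  then show ?case
    using clinear2_comp[OF Suc clinear2_Df_inv] by simp
qed

definition unstable :: "(nat \<Rightarrow> pt) \<Rightarrow> pt \<Rightarrow> bool" where
  "unstable xh v \<longleftrightarrow> (\<forall>k. Dback xh k v \<in> ucone K)"

lemma unstable_snd_le:
  assumes xh: "xh \<in> natext D G T" and v: "unstable xh v"
  shows "cmod (snd (Dback xh k v)) \<le> cmod (snd v)"
proof (induction k)
  case (Suc k)
  have "\<sigma> * cmod (snd (Dback xh (Suc k) v)) \<le> cmod (snd (Df D G (xh (Suc k)) (Dback xh (Suc k) v)))"
    using v Df_ucone(1)[OF natext_mem[OF xh]] unfolding unstable_def by blast
  then have "\<sigma> * cmod (snd (Dback xh (Suc k) v)) \<le> cmod (snd (Dback xh k v))"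
    by (simp only: Df_Dback[OF xh])
  moreover have "cmod (snd (Dback xh (Suc k) v)) \<le> \<sigma> * cmod (snd (Dback xh (Suc k) v))"
    using \<sigma>_gt_1 by (simp add: mult_le_cancel_right1)
  ultimately show ?case
    using Suc.IH by linarith
qed simp

lemma unstable_norm_le:
  assumes "xh \<in> natext D G T" "unstable xh v"
  shows "norm (Dback xh k v) \<le> (K + 1) * cmod (snd v)"
proof -
  have "norm (Dback xh k v) \<le> (K + 1) * cmod (snd (Dback xh k v))"
    using assms(2) by (simp add: unstable_def norm_le_of_ucone)
  also have "\<dots> \<le> (K + 1) * cmod (snd v)"
    using unstable_snd_le[OF assms] K_pos by (intro mult_left_mono) auto
  finally show ?thesis .
qed

lemma Dback_scone:
  assumes xh: "xh \<in> natext D G T" and v: "v \<in> scone K"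
  shows "Dback xh k v \<in> scone K \<and> cmod (fst v) \<le> \<kappa> ^ k * cmod (fst (Dback xh k v))"
proof (induction k)
  case (Suc k)
  let ?u = "Dback xh (Suc k) v"
  have Du: "Df D G (xh (Suc k)) ?u = Dback xh k v"
    by (rule Df_Dback[OF xh])
  then have u: "?u \<in> scone K"
    using Suc.IH scone_of_Df_scone[OF natext_mem[OF xh]] by metis
  have "cmod (fst (Dback xh k v)) \<le> \<kappa> * cmod (fst ?u)"
    using Df_scone[OF natext_mem[OF xh, of "Suc k"] u] unfolding Du .
  then have "\<kappa> ^ k * cmod (fst (Dback xh k v)) \<le> \<kappa> ^ k * (\<kappa> * cmod (fst ?u))"
    using \<kappa>_nonneg by (intro mult_left_mono) auto
  moreover have "cmod (fst v) \<le> \<kappa> ^ k * cmod (fst (Dback xh k v))"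
    using Suc.IH by blast
  ultimately show ?case
    using u by (simp add: mult_ac)
qed (simp add: v)

lemma unstable_det2_eq_0:
  assumes xh: "xh \<in> natext D G T" and v: "unstable xh v" and w: "unstable xh w"
  shows "det2 v w = 0"
proof (rule det2_eq_0_if_bounded[where L = "Dback xh" and e = "(1, 0)"])
  show "clinear2 (Dback xh k)" for k
    by (rule clinear2_Dback)
  have le_sum: "(K + 1) * cmod (snd u) \<le> (K + 1) * (cmod (snd v) + cmod (snd w))" if "u = v \<or> u = w" for u
    using that K_pos by (intro mult_left_mono) auto
  show "norm (Dback xh k v) \<le> (K + 1) * (cmod (snd v) + cmod (snd w))" for k
    using order_trans[OF unstable_norm_le[OF xh v] le_sum] by blast
  show "norm (Dback xh k w) \<le> (K + 1) * (cmod (snd v) + cmod (snd w))" for k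
    using order_trans[OF unstable_norm_le[OF xh w] le_sum] by blast
  show "\<exists>k. B < norm (Dback xh k (1, 0))" for B
  proof -
    have "0 < 1 / (\<bar>B\<bar> + 1)"
      by (simp add: add_nonneg_pos)
    then obtain k where k: "\<kappa> ^ k < 1 / (\<bar>B\<bar> + 1)"
      using real_arch_pow_inv \<kappa>_less_1 by blast
    have "1 \<le> \<kappa> ^ k * cmod (fst (Dback xh k (1, 0)))"
      using Dback_scone[OF xh, of "(1, 0)" k] K_pos by (simp add: scone_def)
    also have "\<dots> \<le> \<kappa> ^ k * norm (Dback xh k (1, 0))"
      using norm_fst_pt_le \<kappa>_nonneg by (intro mult_left_mono) auto
    also have "\<dots> \<le> 1 / (\<bar>B\<bar> + 1) * norm (Dback xh k (1, 0))"
      using k by (intro mult_right_mono) auto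
    finally have "\<bar>B\<bar> + 1 \<le> norm (Dback xh k (1, 0))"
      by (simp add: field_simps)
    then show ?thesis
      using abs_ge_self[of B] by (intro exI[of _ k]) linarith
  qed
qed

lemma iter_natext: "xh \<in> natext D G T \<Longrightarrow> j \<le> n \<Longrightarrow> (f ^^ j) (xh n) = xh (n - j)"
proof (induction j)
  case (Suc j)
  then have "(f ^^ Suc j) (xh n) = f (xh (Suc (n - Suc j)))"
    by (simp add: Suc_diff_Suc)
  then show ?case
    using natext_aff[OF Suc.prems(1)] by simp
qed simp

lemma Dback_Dit:
  assumes xh: "xh \<in> natext D G T"
  shows "k \<le> n \<Longrightarrow> Dback xh k (Dit D G n (xh n) e) = Dit D G (n - k) (xh n) e"
proof (induction k)
  case (Suc k)
  have "Dit D G (n - k) (xh n) e = Df D G (xh (Suc k)) (Dit D G (n - Suc k) (xh n) e)"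
    using Dit_Suc_right[of "n - Suc k" "xh n" e] iter_natext[OF xh, of "n - Suc k" n] Suc.prems
    by (simp add: Suc_diff_Suc)
  then show ?case
    using Suc Df_inv_Df[OF natext_mem[OF xh]] by simp
qed simp

lemma unstable_exists:
  assumes xh: "xh \<in> natext D G T"
  shows "\<exists>v. v \<noteq> 0 \<and> unstable xh v"
proof -
  define C where "C n = {v. \<forall>k\<le>n. Dback xh k v \<in> ucone K}" for n
  have "\<exists>v. v \<noteq> 0 \<and> (\<forall>n. v \<in> C n)"
  proof (rule nonzero_in_nested_cones)
    show "closed (C n)" for n
    proof -
      have "C n = (\<Inter>k\<in>{..n}. Dback xh k -` ucone K)"
        by (auto simp: C_def)
      then show ?thesis
        using clinear2_isCont[OF clinear2_Dback]
        by (simp add: closed_INT continuous_closed_vimage closed_ucone)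
    qed
    show "C n \<subseteq> C m" if "m \<le> n" for m n
      using that by (auto simp: C_def)
    show "cmul t v \<in> C n" if "v \<in> C n" for n t v
      using that by (simp add: C_def clinear2_cmul[OF clinear2_Dback] cmul_in_ucone)
    show "\<exists>v\<in>C n. v \<noteq> 0" for n
    proof -
      define u where "u = Dit D G n (xh n) (0, 1)"
      have cone: "Dit D G j (xh n) (0, 1) \<in> ucone K \<and> \<sigma> ^ j \<le> cmod (snd (Dit D G j (xh n) (0, 1)))" for j
        using Dit_ucone[OF natext_mem[OF xh], of "(0, 1)" j] K_pos by (simp add: ucone_def)
      have "0 < \<sigma> ^ n"
        using \<sigma>_gt_1 by simp
      then have "u \<noteq> 0"
        using cone[of n] by (auto simp: u_def zero_prod_def)
      moreover have "u \<in> C n"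
        using cone by (simp add: C_def u_def Dback_Dit[OF xh])
      ultimately show ?thesis
        by blast
    qed
  qed
  then show ?thesis
    by (auto simp: C_def unstable_def)
qed

lemma shift_natext:
  assumes xh: "xh \<in> natext D G T"
  shows "shift D G xh \<in> natext D G T"
proof -
  have "den D G (xh 0) \<noteq> 0" "f (xh 0) \<in> T"
    using den_nonzero aff_mem natext_mem[OF xh] by auto
  then show ?thesis
    using xh unfolding natext_def shift_def by (auto split: nat.splits)
qed

lemma unstable_shift:
  assumes xh: "xh \<in> natext D G T" and v: "unstable xh v"
  shows "unstable (shift D G xh) (Df D G (xh 0) v)"
proof -
  have "Dback (shift D G xh) (Suc k) (Df D G (xh 0) v) = Dback xh k v" for k
    by (induction k) (simp_all add: shift_def Df_inv_Df natext_mem[OF xh])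
  moreover have "Df D G (xh 0) v \<in> ucone K"
    using v Df_ucone_mem[OF natext_mem[OF xh]] unfolding unstable_def by (metis Dback.simps(1))
  ultimately show ?thesis
    using v unfolding unstable_def by (metis Dback.simps(1) not0_implies_Suc)
qed

definition Es :: "(nat \<Rightarrow> pt) \<Rightarrow> pt" where
  "Es xh = (SOME v. v \<noteq> 0 \<and> stable (xh 0) v)"

definition Eu :: "(nat \<Rightarrow> pt) \<Rightarrow> pt" where
  "Eu xh = (SOME v. v \<noteq> 0 \<and> unstable xh v)"

lemma Es_nonzero_stable: "xh \<in> natext D G T \<Longrightarrow> Es xh \<noteq> 0 \<and> stable (xh 0) (Es xh)"
  unfolding Es_def by (rule someI_ex) (rule stable_exists[OF natext_mem])

lemma Eu_nonzero_unstable: "xh \<in> natext D G T \<Longrightarrow> Eu xh \<noteq> 0 \<and> unstable xh (Eu xh)"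
  unfolding Eu_def by (rule someI_ex) (rule unstable_exists)

text \<open>\<open>Eu\<close> is the image of a vector of the unstable cone, hence lies in the strictly
  narrower cone of \<open>Df_ucone_narrow\<close>, which meets the stable cone only in \<open>0\<close>.\<close>
lemma det2_Es_Eu_nonzero:
  assumes xh: "xh \<in> natext D G T"
  shows "det2 (Es xh) (Eu xh) \<noteq> 0"
proof
  assume "det2 (Es xh) (Eu xh) = 0"
  then obtain t where t: "Eu xh = cmul t (Es xh)"
    using cmul_if_det2_eq_0 Es_nonzero_stable[OF xh] by blast
  have "Es xh \<in> scone K"
    using Es_nonzero_stable[OF xh] Dit.simps(1) unfolding stable_def by metis
  then have "Eu xh \<in> scone K"
    by (simp add: t cmul_in_scone)
  moreover have "Dback xh (Suc 0) (Eu xh) \<in> ucone K"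
    using Eu_nonzero_unstable[OF xh] unfolding unstable_def by blast
  then have "Df D G (xh (Suc 0)) (Dback xh (Suc 0) (Eu xh)) \<in> ucone (K * (\<kappa> / \<sigma>))"
    by (rule Df_ucone_narrow[OF natext_mem[OF xh]])
  then have "Eu xh \<in> ucone (K * (\<kappa> / \<sigma>))"
    by (simp only: Df_Dback[OF xh] Dback.simps(1))
  moreover have "K * (\<kappa> / \<sigma>) < K"
    using K_pos \<kappa>_less_1 \<sigma>_gt_1 \<kappa>_nonneg by (simp add: field_simps)
  ultimately show False
    using scone_Int_ucone Eu_nonzero_unstable[OF xh] by blast
qed

lemma Es_invariant:
  assumes xh: "xh \<in> natext D G T"
  shows "Df D G (xh 0) ` cline (Es xh) = cline (Es (shift D G xh))"
proof -
  have x0: "xh 0 \<in> T" and sh: "shift D G xh \<in> natext D G T" and sh0: "shift D G xh 0 = f (xh 0)"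
    using natext_mem[OF xh] shift_natext[OF xh] by (simp_all add: shift_def)
  have "cline (Df D G (xh 0) (Es xh)) = cline (Es (shift D G xh))"
  proof (rule cline_eq_if_det2_eq_0)
    show "Df D G (xh 0) (Es xh) \<noteq> 0" "Es (shift D G xh) \<noteq> 0"
      using Df_nonzero[OF x0] Es_nonzero_stable[OF xh] Es_nonzero_stable[OF sh] by auto
    show "det2 (Df D G (xh 0) (Es xh)) (Es (shift D G xh)) = 0"
      using stable_det2_eq_0[OF aff_mem[OF x0] stable_Df] Es_nonzero_stable[OF xh] Es_nonzero_stable[OF sh] sh0 by metis
  qed
  then show ?thesis
    by (simp add: clinear2_image_cline[OF clinear2_Df[OF x0]])
qed

lemma Eu_invariant:
  assumes xh: "xh \<in> natext D G T"
  shows "Df D G (xh 0) ` cline (Eu xh) = cline (Eu (shift D G xh))"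
proof -
  have x0: "xh 0 \<in> T" and sh: "shift D G xh \<in> natext D G T"
    using natext_mem[OF xh] shift_natext[OF xh] by simp_all
  have "cline (Df D G (xh 0) (Eu xh)) = cline (Eu (shift D G xh))"
  proof (rule cline_eq_if_det2_eq_0)
    show "Df D G (xh 0) (Eu xh) \<noteq> 0" "Eu (shift D G xh) \<noteq> 0"
      using Df_nonzero[OF x0] Eu_nonzero_unstable[OF xh] Eu_nonzero_unstable[OF sh] by auto
    show "det2 (Df D G (xh 0) (Eu xh)) (Eu (shift D G xh)) = 0"
      using unstable_det2_eq_0[OF sh unstable_shift[OF xh]] Eu_nonzero_unstable[OF xh] Eu_nonzero_unstable[OF sh] by blast
  qed
  then show ?thesis
    by (simp add: clinear2_image_cline[OF clinear2_Df[OF x0]])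
qed

lemma Es_contracts:
  assumes xh: "xh \<in> natext D G T" and v: "v \<in> cline (Es xh)"
  shows "norm (Dit D G n (xh 0) v) \<le> (1 + 1 / K) * \<kappa> ^ n * norm v"
proof -
  obtain t where "v = cmul t (Es xh)"
    using v by (auto simp: cline_eq_range_cmul)
  then have "stable (xh 0) v"
    using stable_cmul[OF natext_mem[OF xh]] Es_nonzero_stable[OF xh] by blast
  then show ?thesis
    by (rule stable_norm_le[OF natext_mem[OF xh]])
qed

lemma Eu_expands:
  assumes xh: "xh \<in> natext D G T" and v: "v \<in> cline (Eu xh)"
  shows "\<sigma> ^ n * norm v \<le> (K + 1) * norm (Dit D G n (xh 0) v)"
proof -
  obtain t where "v = cmul t (Eu xh)"
    using v by (auto simp: cline_eq_range_cmul)
  moreover have "Eu xh \<in> ucone K"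
    using Eu_nonzero_unstable[OF xh] Dback.simps(1) unfolding unstable_def by metis
  ultimately have u: "v \<in> ucone K"
    by (simp add: cmul_in_ucone)
  have "\<sigma> ^ n * norm v \<le> \<sigma> ^ n * ((K + 1) * cmod (snd v))"
    using norm_le_of_ucone[OF u] \<sigma>_gt_1 by (intro mult_left_mono) auto
  also have "\<dots> = (K + 1) * (\<sigma> ^ n * cmod (snd v))"
    by simp
  also have "\<dots> \<le> (K + 1) * norm (Dit D G n (xh 0) v)"
    using Dit_ucone[OF natext_mem[OF xh, of 0] u, of n] norm_snd_pt_le[of "Dit D G n (xh 0) v"] K_pos
    by (intro mult_left_mono) auto
  finally show ?thesis .
qed

theorem hyp_saddle: "hyp_saddle D G T"
proof -
  define C where "C = K + 1 + 1 / K"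
  define L where "L = max \<kappa> (1 / \<sigma>)"
  have C: "1 + 1 / K \<le> C" "K + 1 \<le> C" "0 < C"
    using K_pos by (simp_all add: C_def add_pos_pos)
  have L: "0 < L" "L < 1" "\<kappa> \<le> L"
    using \<sigma>_gt_1 \<kappa>_less_1 by (auto simp: L_def less_max_iff_disj)
  have "1 / \<sigma> \<le> L"
    by (simp add: L_def)
  then have L': "1 / L \<le> \<sigma>"
    using L \<sigma>_gt_1 by (simp add: field_simps)
  show ?thesis
    unfolding hyp_saddle_def
  proof (rule exI[of _ C], rule exI[of _ L], rule exI[of _ Es], rule exI[of _ Eu],
      intro conjI ballI allI impI C L)
    fix xh assume xh: "xh \<in> natext D G T"
    show "Es xh \<noteq> 0" "Eu xh \<noteq> 0"
      using Es_nonzero_stable[OF xh] Eu_nonzero_unstable[OF xh] by auto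
    show "det2 (Es xh) (Eu xh) \<noteq> 0"
      by (rule det2_Es_Eu_nonzero[OF xh])
    show "Df D G (xh 0) ` cline (Es xh) = cline (Es (shift D G xh))"
      by (rule Es_invariant[OF xh])
    show "Df D G (xh 0) ` cline (Eu xh) = cline (Eu (shift D G xh))"
      by (rule Eu_invariant[OF xh])
  next
    fix xh n v assume xh: "xh \<in> natext D G T" and "v \<in> cline (Es xh)"
    have "(1 + 1 / K) * \<kappa> ^ n * norm v \<le> C * L ^ n * norm v"
      using C L \<kappa>_nonneg by (intro mult_right_mono mult_mono power_mono) auto
    then show "norm (Dit D G n (xh 0) v) \<le> C * L ^ n * norm v"
      using Es_contracts[OF xh \<open>v \<in> cline (Es xh)\<close>, of n] by linarith
  next
    fix xh n v assume xh: "xh \<in> natext D G T" and v: "v \<in> cline (Eu xh)"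
    have "(1 / C) * (1 / L) ^ n * norm v \<le> (1 / (K + 1)) * \<sigma> ^ n * norm v"
      using C L L' K_pos by (intro mult_right_mono mult_mono power_mono) (auto simp: field_simps)
    also have "\<dots> \<le> norm (Dit D G n (xh 0) v)"
      using Eu_expands[OF xh v, of n] K_pos by (simp add: field_simps)
    finally show "(1 / C) * (1 / L) ^ n * norm v \<le> norm (Dit D G n (xh 0) v)" .
  qed
qed

end

section \<open>The chart map of an endomorphism of \<open>\<complex>\<bbbP>\<^sup>2\<close> and its perturbations\<close>

definition hexps :: "nat \<Rightarrow> (nat \<times> nat) set" where
  "hexps D = (SIGMA i:{..D}. {..D - i})"

lemma finite_hexps: "finite (hexps D)"
  by (simp add: hexps_def)

lemma hexps_le: "k \<in> hexps D \<Longrightarrow> fst k + snd k \<le> D"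
  by (auto simp: hexps_def)

lemma hev_at_1: "hev D a x y 1 = (\<Sum>k\<in>hexps D. a k * x ^ fst k * y ^ snd k)"
  unfolding hev_def hexps_def by (simp add: case_prod_beta)

definition hev_dx :: "nat \<Rightarrow> (nat \<times> nat \<Rightarrow> complex) \<Rightarrow> complex \<Rightarrow> complex \<Rightarrow> complex" where
  "hev_dx D a x y = (\<Sum>k\<in>hexps D. a k * (of_nat (fst k) * x ^ (fst k - 1)) * y ^ snd k)"

definition hev_dy :: "nat \<Rightarrow> (nat \<times> nat \<Rightarrow> complex) \<Rightarrow> complex \<Rightarrow> complex \<Rightarrow> complex" where
  "hev_dy D a x y = (\<Sum>k\<in>hexps D. a k * x ^ fst k * (of_nat (snd k) * y ^ (snd k - 1)))"

lemma has_derivative_monomial: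
  "((\<lambda>p::pt. c * fst p ^ i * snd p ^ j) has_derivative
     (\<lambda>v. c * (of_nat i * fst p ^ (i - 1)) * snd p ^ j * fst v
        + c * fst p ^ i * (of_nat j * snd p ^ (j - 1)) * snd v)) (at p)"
proof -
  have "((\<lambda>p::pt. c * fst p ^ i * snd p ^ j) has_derivative
     (\<lambda>v. c * (of_nat i * fst v * fst p ^ (i - 1)) * snd p ^ j
        + c * fst p ^ i * (of_nat j * snd v * snd p ^ (j - 1)))) (at p)"
    by (intro derivative_eq_intros) (auto simp: algebra_simps)
  then show ?thesis
    by (simp add: algebra_simps)
qed

lemma hev_has_derivative:
  "((\<lambda>p. hev D a (fst p) (snd p) 1) has_derivative
     (\<lambda>v. hev_dx D a (fst p) (snd p) * fst v + hev_dy D a (fst p) (snd p) * snd v)) (at p)"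
proof -
  have "((\<lambda>p. \<Sum>k\<in>hexps D. a k * fst p ^ fst k * snd p ^ snd k) has_derivative
    (\<lambda>v. \<Sum>k\<in>hexps D. a k * (of_nat (fst k) * fst p ^ (fst k - 1)) * snd p ^ snd k * fst v
          + a k * fst p ^ fst k * (of_nat (snd k) * snd p ^ (snd k - 1)) * snd v)) (at p)"
    by (intro has_derivative_sum has_derivative_monomial)
  moreover have "(\<lambda>v. \<Sum>k\<in>hexps D. a k * (of_nat (fst k) * fst p ^ (fst k - 1)) * snd p ^ snd k * fst v
          + a k * fst p ^ fst k * (of_nat (snd k) * snd p ^ (snd k - 1)) * snd v)
     = (\<lambda>v. hev_dx D a (fst p) (snd p) * fst v + hev_dy D a (fst p) (snd p) * snd v)"
    by (simp add: hev_dx_def hev_dy_def sum.distrib sum_distrib_right)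
  ultimately show ?thesis
    by (simp add: hev_at_1)
qed

lemma hev_has_field_derivative_x: "((\<lambda>x. hev D a x y 1) has_field_derivative hev_dx D a x y) (at x)"
proof -
  have "((\<lambda>x. \<Sum>k\<in>hexps D. a k * x ^ fst k * y ^ snd k) has_field_derivative
       (\<Sum>k\<in>hexps D. a k * (of_nat (fst k) * x ^ (fst k - 1)) * y ^ snd k)) (at x)"
    by (intro DERIV_sum) (auto intro!: derivative_eq_intros simp: algebra_simps)
  then show ?thesis
    by (simp add: hev_at_1 hev_dx_def)
qed

lemma hev_has_field_derivative_y: "((\<lambda>y. hev D a x y 1) has_field_derivative hev_dy D a x y) (at y)"
proof -
  have "((\<lambda>y. \<Sum>k\<in>hexps D. a k * x ^ fst k * y ^ snd k) has_field_derivative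
       (\<Sum>k\<in>hexps D. a k * x ^ fst k * (of_nat (snd k) * y ^ (snd k - 1)))) (at y)"
    by (intro DERIV_sum) (auto intro!: derivative_eq_intros simp: algebra_simps)
  then show ?thesis
    by (simp add: hev_at_1 hev_dy_def)
qed

definition quot_deriv :: "complex \<Rightarrow> complex \<Rightarrow> complex \<Rightarrow> complex \<Rightarrow> complex" where
  "quot_deriv u' u s s' = (u' * s - u * s') / (s * s)"

definition aff_dx :: "nat \<Rightarrow> hmap \<Rightarrow> (hmap \<Rightarrow> nat \<times> nat \<Rightarrow> complex) \<Rightarrow> pt \<Rightarrow> complex" where
  "aff_dx D G P p = quot_deriv (hev_dx D (P G) (fst p) (snd p)) (hev D (P G) (fst p) (snd p) 1)
     (den D G p) (hev_dx D (P3 G) (fst p) (snd p))"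

definition aff_dy :: "nat \<Rightarrow> hmap \<Rightarrow> (hmap \<Rightarrow> nat \<times> nat \<Rightarrow> complex) \<Rightarrow> pt \<Rightarrow> complex" where
  "aff_dy D G P p = quot_deriv (hev_dy D (P G) (fst p) (snd p)) (hev D (P G) (fst p) (snd p) 1)
     (den D G p) (hev_dy D (P3 G) (fst p) (snd p))"

lemma Df_eq_aff_partials:
  assumes "den D G p \<noteq> 0"
  shows "Df D G p = (\<lambda>v. (aff_dx D G P1 p * fst v + aff_dy D G P1 p * snd v,
                           aff_dx D G P2 p * fst v + aff_dy D G P2 p * snd v))"
proof -
  let ?S = "\<lambda>p. hev D (P3 G) (fst p) (snd p) 1"
  have aff: "aff D G = (\<lambda>p. (hev D (P1 G) (fst p) (snd p) 1 / ?S p, hev D (P2 G) (fst p) (snd p) 1 / ?S p))"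
    by (rule ext) (simp add: aff_def den_def)
  have S: "?S p \<noteq> 0" "?S p * ?S p \<noteq> 0"
    using assms by (simp_all add: den_def)
  have quot: "((A * x + B * y) * S - U * (C * x + E * y)) / Q = (A * S - U * C) / Q * x + (B * S - U * E) / Q * y"
    if "Q \<noteq> 0" for A B C E S U Q x y :: complex
    using that by (simp add: field_simps)
  have "(aff D G has_derivative (\<lambda>v. (aff_dx D G P1 p * fst v + aff_dy D G P1 p * snd v,
                                      aff_dx D G P2 p * fst v + aff_dy D G P2 p * snd v))) (at p)"
    unfolding aff
    by (rule has_derivative_eq_rhs[OF has_derivative_Pair[OF
          has_derivative_divide'[OF hev_has_derivative hev_has_derivative S(1)]
          has_derivative_divide'[OF hev_has_derivative hev_has_derivative S(1)]]])
      (simp add: fun_eq_iff aff_dx_def aff_dy_def quot_deriv_def den_def quot[OF S(2)])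
  then show ?thesis
    unfolding Df_def by (rule frechet_derivative_at[symmetric])
qed

definition coeff_weight :: "nat \<Rightarrow> (nat \<times> nat \<Rightarrow> complex) \<Rightarrow> real \<Rightarrow> real" where
  "coeff_weight D c R = (\<Sum>k\<in>hexps D. cmod (c k) * (1 + real (fst k) + real (snd k)) * R ^ (fst k + snd k))"

lemma coeff_weight_nonneg: "0 \<le> R \<Longrightarrow> 0 \<le> coeff_weight D c R"
  unfolding coeff_weight_def by (intro sum_nonneg mult_nonneg_nonneg) auto

lemma coeff_weight_le:
  assumes "\<And>k. k \<in> hexps D \<Longrightarrow> cmod (c k) \<le> e" "0 \<le> R"
  shows "coeff_weight D c R \<le> e * coeff_weight D (\<lambda>_. 1) R"
  unfolding coeff_weight_def sum_distrib_left
  by (intro sum_mono) (use assms in \<open>auto simp: mult.assoc intro!: mult_right_mono\<close>)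

lemma monomial_le:
  fixes x y :: complex
  assumes R: "1 \<le> R" "cmod x \<le> R" "cmod y \<le> R"
    and exps: "i' \<le> i" "j' \<le> j" and n: "real n \<le> 1 + real i + real j"
  shows "cmod (of_nat n * x ^ i' * y ^ j') \<le> (1 + real i + real j) * R ^ (i + j)"
proof -
  have "cmod x ^ i' \<le> R ^ i" "cmod y ^ j' \<le> R ^ j"
    using R exps by (meson norm_ge_zero order_trans power_increasing power_mono)+
  then have "real n * (cmod x ^ i' * cmod y ^ j') \<le> (1 + real i + real j) * (R ^ i * R ^ j)"
    using n R by (intro mult_mono) auto
  then show ?thesis
    by (simp add: norm_mult norm_power power_add mult.assoc)
qed

lemma norm_sum_le_coeff_weight:
  assumes "\<And>k. k \<in> hexps D \<Longrightarrow> cmod (t k) \<le> (1 + real (fst k) + real (snd k)) * R ^ (fst k + snd k)"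
  shows "cmod (\<Sum>k\<in>hexps D. c k * t k) \<le> coeff_weight D c R"
  unfolding coeff_weight_def
  by (rule order_trans[OF norm_sum sum_mono])
    (use assms in \<open>auto simp: norm_mult mult.assoc intro: mult_left_mono\<close>)

lemma hev_bounds:
  assumes "1 \<le> R" "cmod x \<le> R" "cmod y \<le> R"
  shows "cmod (hev D c x y 1) \<le> coeff_weight D c R"
    and "cmod (hev_dx D c x y) \<le> coeff_weight D c R"
    and "cmod (hev_dy D c x y) \<le> coeff_weight D c R"
proof -
  have "cmod (\<Sum>k\<in>hexps D. c k * (of_nat 1 * x ^ fst k * y ^ snd k)) \<le> coeff_weight D c R"
    using assms by (intro norm_sum_le_coeff_weight monomial_le) auto
  then show "cmod (hev D c x y 1) \<le> coeff_weight D c R"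
    by (simp add: hev_at_1 mult.assoc)
  have "cmod (\<Sum>k\<in>hexps D. c k * (of_nat (fst k) * x ^ (fst k - 1) * y ^ snd k)) \<le> coeff_weight D c R"
    using assms by (intro norm_sum_le_coeff_weight monomial_le) auto
  then show "cmod (hev_dx D c x y) \<le> coeff_weight D c R"
    by (simp add: hev_dx_def mult.assoc)
  have "cmod (\<Sum>k\<in>hexps D. c k * (of_nat (snd k) * x ^ fst k * y ^ (snd k - 1))) \<le> coeff_weight D c R"
    using assms by (intro norm_sum_le_coeff_weight monomial_le) auto
  then show "cmod (hev_dy D c x y) \<le> coeff_weight D c R"
    by (simp add: hev_dy_def mult_ac)
qed

lemma hev_diff: "hev D a x y 1 - hev D b x y 1 = hev D (\<lambda>k. a k - b k) x y 1"
  and hev_dx_diff: "hev_dx D a x y - hev_dx D b x y = hev_dx D (\<lambda>k. a k - b k) x y"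
  and hev_dy_diff: "hev_dy D a x y - hev_dy D b x y = hev_dy D (\<lambda>k. a k - b k) x y"
  unfolding hev_at_1 hev_dx_def hev_dy_def sum_subtractf[symmetric]
  by (simp_all add: left_diff_distrib)

lemma hev_close:
  assumes coeffs: "\<forall>k\<in>hexps D. cmod (a k - b k) \<le> e"
    and R: "1 \<le> R" "cmod x \<le> R" "cmod y \<le> R"
  shows "cmod (hev D a x y 1 - hev D b x y 1) \<le> e * coeff_weight D (\<lambda>_. 1) R"
    and "cmod (hev_dx D a x y - hev_dx D b x y) \<le> e * coeff_weight D (\<lambda>_. 1) R"
    and "cmod (hev_dy D a x y - hev_dy D b x y) \<le> e * coeff_weight D (\<lambda>_. 1) R"
proof -
  have W: "coeff_weight D (\<lambda>k. a k - b k) R \<le> e * coeff_weight D (\<lambda>_. 1) R"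
    using coeff_weight_le[of D "\<lambda>k. a k - b k" e R] coeffs R by force
  show "cmod (hev D a x y 1 - hev D b x y 1) \<le> e * coeff_weight D (\<lambda>_. 1) R"
    unfolding hev_diff using hev_bounds(1)[OF R] W by (rule order_trans)
  show "cmod (hev_dx D a x y - hev_dx D b x y) \<le> e * coeff_weight D (\<lambda>_. 1) R"
    unfolding hev_dx_diff using hev_bounds(2)[OF R] W by (rule order_trans)
  show "cmod (hev_dy D a x y - hev_dy D b x y) \<le> e * coeff_weight D (\<lambda>_. 1) R"
    unfolding hev_dy_diff using hev_bounds(3)[OF R] W by (rule order_trans)
qed

lemma near_coeff_le:
  assumes "near D F G e" "k \<in> hexps D"
  shows "cmod (P1 G k - P1 F k) \<le> e" "cmod (P2 G k - P2 F k) \<le> e" "cmod (P3 G k - P3 F k) \<le> e"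
  using assms hexps_le[OF assms(2)] unfolding near_def
  by (cases k; force simp: norm_minus_commute)+

definition normalized_den :: "nat \<Rightarrow> hmap \<Rightarrow> bool" where
  "normalized_den D F \<longleftrightarrow> (\<forall>i j. i + j \<le> D \<longrightarrow> P3 F (i, j) = (if (i, j) = (0, 0) then 1 else 0))"

lemma normalized_den_hev:
  assumes "normalized_den D F"
  shows "hev D (P3 F) x y 1 = 1" "hev_dx D (P3 F) x y = 0" "hev_dy D (P3 F) x y = 0"
proof -
  have c: "P3 F k = (if k = (0, 0) then 1 else 0)" if "k \<in> hexps D" for k
    using assms hexps_le[OF that] by (cases k) (auto simp: normalized_den_def)
  have "hev D (P3 F) x y 1 = (\<Sum>k\<in>hexps D. if k = (0, 0) then 1 else 0)"
    unfolding hev_at_1 by (rule sum.cong) (auto simp: c)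
  also have "\<dots> = 1"
    using finite_hexps by (simp add: hexps_def)
  finally show "hev D (P3 F) x y 1 = 1" .
  show "hev_dx D (P3 F) x y = 0" "hev_dy D (P3 F) x y = 0"
    unfolding hev_dx_def hev_dy_def by (auto intro!: sum.neutral simp: c)
qed

text \<open>\<open>quot_deriv u' u 1 0 = u'\<close>: the quotient rule is stable near a denominator equal to \<open>1\<close>.\<close>
lemma quot_deriv_close:
  fixes u' u U' U S S' :: complex and \<tau> B :: real
  assumes \<tau>: "\<tau> \<le> 1/2" and U': "cmod (U' - u') \<le> \<tau>" and U: "cmod (U - u) \<le> \<tau>"
    and S: "cmod (S - 1) \<le> \<tau>" and S': "cmod S' \<le> \<tau>" and u: "cmod u \<le> B" and u': "cmod u' \<le> B"
  shows "cmod (quot_deriv U' U S S' - u') \<le> 12 * \<tau> * (1 + B)"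
proof -
  have \<tau>0: "0 \<le> \<tau>" and B0: "0 \<le> B"
    using U' u by (meson norm_ge_zero order_trans)+
  have S_lower: "1/2 \<le> cmod S" and S_upper: "cmod S \<le> 3/2"
    using norm_triangle_ineq2[of S 1] norm_triangle_ineq2[of 1 S] S \<tau>
    by (simp_all add: norm_minus_commute)
  have U_upper: "cmod U \<le> B + \<tau>"
    using norm_triangle_ineq2[of U u] U u by linarith
  define N where "N = (U' - u') * S + u' * S * (1 - S) - U * S'"
  have "S \<noteq> 0"
    using S_lower by auto
  then have eq: "quot_deriv U' U S S' - u' = N / (S * S)"
    unfolding quot_deriv_def N_def by (simp add: field_simps)
  have "cmod N \<le> cmod ((U' - u') * S) + cmod (u' * S * (1 - S)) + cmod (U * S')"
    unfolding N_def by (metis norm_triangle_ineq norm_triangle_ineq4 add_right_mono order_trans)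
  also have "\<dots> \<le> \<tau> * (3/2) + B * (3/2) * \<tau> + (B + \<tau>) * \<tau>"
    unfolding norm_mult using U' u' S S' S_upper U_upper \<tau>0 B0
    by (intro add_mono mult_mono) (auto simp: norm_minus_commute)
  also have "\<dots> = (3/2) * \<tau> + (5/2) * (B * \<tau>) + \<tau> * \<tau>"
    by (simp add: algebra_simps)
  also have "\<dots> \<le> 3 * \<tau> + 3 * (B * \<tau>)"
    using mult_left_mono[OF \<tau> \<tau>0] mult_nonneg_nonneg[OF B0 \<tau>0] \<tau>0 by linarith
  also have "\<dots> = 3 * \<tau> * (1 + B)"
    by (simp add: algebra_simps)
  finally have N: "cmod N \<le> 3 * \<tau> * (1 + B)" .
  have "1/4 \<le> cmod (S * S)"
    using mult_mono[OF S_lower S_lower] by (simp add: norm_mult)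
  then have "cmod (N / (S * S)) \<le> (3 * \<tau> * (1 + B)) / (1/4)"
    unfolding norm_divide using N \<tau>0 B0 by (intro frac_le) auto
  then show ?thesis
    using eq by simp
qed

lemma den_close:
  assumes F: "normalized_den D F" and P3: "\<forall>k\<in>hexps D. cmod (P3 G k - P3 F k) \<le> e"
    and R: "1 \<le> R" "cmod (fst p) \<le> R" "cmod (snd p) \<le> R"
  shows "cmod (den D G p - 1) \<le> e * coeff_weight D (\<lambda>_. 1) R"
    and "cmod (hev_dx D (P3 G) (fst p) (snd p)) \<le> e * coeff_weight D (\<lambda>_. 1) R"
    and "cmod (hev_dy D (P3 G) (fst p) (snd p)) \<le> e * coeff_weight D (\<lambda>_. 1) R"
  using hev_close[OF P3 R] by (simp_all add: den_def normalized_den_hev[OF F])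

lemma aff_partials_close:
  assumes F: "normalized_den D F" and R: "1 \<le> R" "cmod (fst p) \<le> R" "cmod (snd p) \<le> R"
    and P: "\<forall>k\<in>hexps D. cmod (P G k - P F k) \<le> e"
    and P3: "\<forall>k\<in>hexps D. cmod (P3 G k - P3 F k) \<le> e"
    and \<tau>: "e * coeff_weight D (\<lambda>_. 1) R \<le> \<tau>" "\<tau> \<le> 1/2" and B: "coeff_weight D (P F) R \<le> B"
  shows "cmod (aff_dx D G P p - hev_dx D (P F) (fst p) (snd p)) \<le> 12 * \<tau> * (1 + B)"
    and "cmod (aff_dy D G P p - hev_dy D (P F) (fst p) (snd p)) \<le> 12 * \<tau> * (1 + B)"
proof -
  note close = hev_close[OF P R, THEN order_trans, OF \<tau>(1)]
  note den = den_close[OF F P3 R, THEN order_trans, OF \<tau>(1)]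
  note bound = hev_bounds[OF R, of D "P F", THEN order_trans, OF B]
  show "cmod (aff_dx D G P p - hev_dx D (P F) (fst p) (snd p)) \<le> 12 * \<tau> * (1 + B)"
    unfolding aff_dx_def by (rule quot_deriv_close[OF \<tau>(2) close(2) close(1) den(1) den(2) bound(1) bound(2)])
  show "cmod (aff_dy D G P p - hev_dy D (P F) (fst p) (snd p)) \<le> 12 * \<tau> * (1 + B)"
    unfolding aff_dy_def by (rule quot_deriv_close[OF \<tau>(2) close(3) close(1) den(1) den(3) bound(1) bound(3)])
qed

lemma near_aff_partials_close:
  assumes F: "normalized_den D F" and R: "1 \<le> R" and \<tau>: "0 < \<tau>"
  shows "\<exists>e>0. \<forall>G p. near D F G e \<and> cmod (fst p) \<le> R \<and> cmod (snd p) \<le> R \<longrightarrow>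
      den D G p \<noteq> 0 \<and>
      cmod (aff_dx D G P1 p - hev_dx D (P1 F) (fst p) (snd p)) \<le> \<tau> \<and>
      cmod (aff_dy D G P1 p - hev_dy D (P1 F) (fst p) (snd p)) \<le> \<tau> \<and>
      cmod (aff_dx D G P2 p - hev_dx D (P2 F) (fst p) (snd p)) \<le> \<tau> \<and>
      cmod (aff_dy D G P2 p - hev_dy D (P2 F) (fst p) (snd p)) \<le> \<tau>"
proof -
  define B where "B = coeff_weight D (P1 F) R + coeff_weight D (P2 F) R"
  define W where "W = coeff_weight D (\<lambda>_. 1) R"
  define \<tau>' where "\<tau>' = \<tau> / (12 * (1 + B) + 2 * \<tau>)"
  have B: "coeff_weight D (P1 F) R \<le> B" "coeff_weight D (P2 F) R \<le> B" "0 \<le> B" and W: "0 \<le> W"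
    using R by (simp_all add: B_def W_def coeff_weight_nonneg)
  then have \<tau>': "0 < \<tau>'" "\<tau>' \<le> 1/2" "12 * \<tau>' * (1 + B) \<le> \<tau>"
    using \<tau> by (simp_all add: \<tau>'_def field_simps)
  show ?thesis
  proof (intro exI[of _ "\<tau>' / (W + 1)"] conjI allI impI)
    show "0 < \<tau>' / (W + 1)"
      using \<tau>' W by simp
    have eW: "\<tau>' / (W + 1) * W \<le> \<tau>'"
      using \<tau>' W by (simp add: field_simps)
    fix G p assume near: "near D F G (\<tau>' / (W + 1)) \<and> cmod (fst p) \<le> R \<and> cmod (snd p) \<le> R"
    then have R': "1 \<le> R" "cmod (fst p) \<le> R" "cmod (snd p) \<le> R"
      using R by auto
    have coeffs: "\<forall>k\<in>hexps D. cmod (P1 G k - P1 F k) \<le> \<tau>' / (W + 1)"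
        "\<forall>k\<in>hexps D. cmod (P2 G k - P2 F k) \<le> \<tau>' / (W + 1)"
        "\<forall>k\<in>hexps D. cmod (P3 G k - P3 F k) \<le> \<tau>' / (W + 1)"
      using near_coeff_le near by blast+
    show "den D G p \<noteq> 0"
      using den_close(1)[OF F coeffs(3) R'] eW \<tau>' by (auto simp: W_def)
    show "cmod (aff_dx D G P1 p - hev_dx D (P1 F) (fst p) (snd p)) \<le> \<tau>"
         "cmod (aff_dy D G P1 p - hev_dy D (P1 F) (fst p) (snd p)) \<le> \<tau>"
      using aff_partials_close[OF F R' coeffs(1) coeffs(3), of \<tau>' B] eW \<tau>' B(1)
      by (auto simp: W_def)
    show "cmod (aff_dx D G P2 p - hev_dx D (P2 F) (fst p) (snd p)) \<le> \<tau>"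
         "cmod (aff_dy D G P2 p - hev_dy D (P2 F) (fst p) (snd p)) \<le> \<tau>"
      using aff_partials_close[OF F R' coeffs(2) coeffs(3), of \<tau>' B] eW \<tau>' B(2)
      by (auto simp: W_def)
  qed
qed

lemma cone_constants_exist:
  fixes a0 a1 B mF :: real
  assumes "0 < a0" "a1 < 1" "0 \<le> B" "1 < mF"
  shows "\<exists>\<tau> K. 0 < \<tau> \<and> 0 < K \<and> \<tau> \<le> a0 / 4 \<and> (B + \<tau>) * \<tau> \<le> a0 / 4 \<and>
    a1 + \<tau> + (B + \<tau>) / K < 1 \<and> 1 < (mF - \<tau>) - \<tau> * K"
proof -
  define g where "g = 1 - a1"
  define K where "K = 4 * (B + 1) / g + 1"
  define \<tau> where "\<tau> = min (min (g / 4) (a0 / (4 * (B + 1)))) (min ((mF - 1) / (2 * (1 + K))) 1)"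
  have g: "0 < g" and K: "0 < K"
    using assms by (simp_all add: g_def K_def add_nonneg_pos)
  have "0 < \<tau>"
    using assms g K by (simp add: \<tau>_def)
  moreover have "\<tau> \<le> g / 4" "\<tau> \<le> a0 / (4 * (B + 1))" "\<tau> \<le> (mF - 1) / (2 * (1 + K))" "\<tau> \<le> 1"
    unfolding \<tau>_def by (simp_all only: min_le_iff_disj order_refl simp_thms)
  ultimately have \<tau>: "0 < \<tau>" "\<tau> \<le> g / 4" "\<tau> \<le> a0 / (4 * (B + 1))" "\<tau> \<le> (mF - 1) / (2 * (1 + K))" "\<tau> \<le> 1"
    by blast+
  have "a0 / (4 * (B + 1)) \<le> a0 / 4"
    using assms by (intro divide_left_mono) auto
  then have "\<tau> \<le> a0 / 4"
    using \<tau>(3) by linarith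
  moreover have "(B + \<tau>) * \<tau> \<le> a0 / 4"
  proof -
    have "(B + \<tau>) * \<tau> \<le> (B + 1) * (a0 / (4 * (B + 1)))"
      using \<tau> assms(3) by (intro mult_mono) linarith+
    also have "\<dots> = a0 / 4"
      using assms by (simp add: field_simps)
    finally show ?thesis .
  qed
  moreover have "a1 + \<tau> + (B + \<tau>) / K < 1"
  proof -
    have "g / 4 * K = B + 1 + g / 4"
      using g by (simp add: K_def field_simps)
    then have "B + \<tau> \<le> g / 4 * K"
      using \<tau>(5) g by linarith
    then have "(B + \<tau>) / K \<le> g / 4"
      using K by (simp add: field_simps)
    then show ?thesis
      using \<tau>(2) g g_def by linarith
  qed
  moreover have "1 < (mF - \<tau>) - \<tau> * K"
  proof -
    have "\<tau> * (1 + K) \<le> (mF - 1) / 2"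
      using \<tau>(4) K by (simp add: field_simps)
    then show ?thesis
      using assms(4) by (simp add: algebra_simps)
  qed
  ultimately show ?thesis
    using \<tau>(1) K by blast
qed

lemma cone_field_of_close_entries:
  assumes T: "\<And>p. p \<in> T \<Longrightarrow> aff D G p \<in> T \<and> den D G p \<noteq> 0 \<and>
        Df D G p = (\<lambda>v. (a p * fst v + b p * snd v, c p * fst v + d p * snd v))"
    and close: "\<And>p. p \<in> T \<Longrightarrow> cmod (a p - a' p) \<le> \<tau> \<and> cmod (b p - b' p) \<le> \<tau> \<and>
        cmod (c p) \<le> \<tau> \<and> cmod (d p - d' p) \<le> \<tau>"
    and ref: "\<And>p. p \<in> T \<Longrightarrow> a0 \<le> cmod (a' p) \<and> cmod (a' p) \<le> a1 \<and> cmod (b' p) \<le> B \<and> mF \<le> cmod (d' p)"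
    and ineqs: "0 < a0" "a0 \<le> a1" "0 \<le> B" "0 < \<tau>" "0 < K" "\<tau> \<le> a0 / 4" "(B + \<tau>) * \<tau> \<le> a0 / 4"
      "a1 + \<tau> + (B + \<tau>) / K < 1" "1 < (mF - \<tau>) - \<tau> * K"
  shows "cone_field D G T a b c d (a1 + \<tau>) (B + \<tau>) \<tau> K (mF - \<tau>)"
proof
  fix p assume p: "p \<in> T"
  note cl = close[OF p] and rf = ref[OF p]
  show "aff D G p \<in> T" "den D G p \<noteq> 0"
      "Df D G p = (\<lambda>v. (a p * fst v + b p * snd v, c p * fst v + d p * snd v))"
    using T[OF p] by auto
  show a: "cmod (a p) \<le> a1 + \<tau>"
    using cl rf norm_triangle_ineq2[of "a p" "a' p"] by linarith
  show b: "cmod (b p) \<le> B + \<tau>"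
    using cl rf norm_triangle_ineq2[of "b p" "b' p"] by linarith
  show c: "cmod (c p) \<le> \<tau>"
    using cl by blast
  show d: "mF - \<tau> \<le> cmod (d p)"
    using cl rf norm_triangle_ineq2[of "d' p" "d p"] by (simp add: norm_minus_commute)
  have "1 \<le> mF - \<tau>"
    using ineqs mult_pos_pos[of \<tau> K] by linarith
  then have "a0 / 4 < (a0 - \<tau>) * (mF - \<tau>)"
  proof -
    have "a0 - \<tau> \<le> (a0 - \<tau>) * (mF - \<tau>)"
      using ineqs mult_left_mono[OF \<open>1 \<le> mF - \<tau>\<close>, of "a0 - \<tau>"] by simp
    then show ?thesis
      using ineqs by linarith
  qed
  also have "\<dots> \<le> cmod (a p) * cmod (d p)"
    using cl rf d norm_triangle_ineq2[of "a' p" "a p"] ineqs \<open>1 \<le> mF - \<tau>\<close>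
    by (intro mult_mono) (auto simp: norm_minus_commute)
  moreover have "cmod (b p) * cmod (c p) \<le> (B + \<tau>) * \<tau>"
    using b c ineqs by (intro mult_mono) auto
  ultimately have "cmod (b p) * cmod (c p) < cmod (a p) * cmod (d p)"
    using ineqs by linarith
  then show "a p * d p - b p * c p \<noteq> 0"
    by (metis eq_iff_diff_eq_0 less_irrefl norm_mult)
next
  show "0 \<le> a1 + \<tau>" "0 \<le> B + \<tau>" "0 \<le> \<tau>" "0 < K" "a1 + \<tau> + (B + \<tau>) / K < 1" "1 < mF - \<tau> - \<tau> * K"
    using ineqs by auto
qed

lemma bounded_coords_le:
  assumes "bounded (Z :: pt set)"
  shows "\<exists>R\<ge>1. \<forall>p\<in>Z. cmod (fst p) \<le> R \<and> cmod (snd p) \<le> R"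
proof -
  obtain r where r: "\<And>p. p \<in> Z \<Longrightarrow> norm p \<le> r"
    using assms unfolding bounded_iff by blast
  have "cmod (fst p) \<le> max 1 r \<and> cmod (snd p) \<le> max 1 r" if "p \<in> Z" for p
    using r[OF that] norm_fst_pt_le[of p] norm_snd_pt_le[of p] by (simp add: le_max_iff_disj)
  then show ?thesis
    by (intro exI[of _ "max 1 r"]) auto
qed

lemma lam_memD:
  assumes "p \<in> lam D G Z"
  shows "p \<in> Z" "den D G p \<noteq> 0" "aff D G p \<in> lam D G Z"
proof -
  obtain x where x: "x 0 = p" "\<forall>n. x n \<in> Z \<and> den D G (x n) \<noteq> 0 \<and> x (Suc n) = aff D G (x n)"
    using assms unfolding lam_def by blast
  then show "p \<in> Z" "den D G p \<noteq> 0"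
    by auto
  show "aff D G p \<in> lam D G Z"
    unfolding lam_def
  proof (rule CollectI, rule exI[of _ "\<lambda>n. x (Suc n)"], rule conjI)
    show "x (Suc 0) = aff D G p"
      using x by simp
    show "\<forall>n. x (Suc n) \<in> Z \<and> den D G (x (Suc n)) \<noteq> 0 \<and> x (Suc (Suc n)) = aff D G (x (Suc n))"
      using x(2) by blast
  qed
qed

text \<open>On \<open>Z\<close> the Jacobian of \<open>F\<close> is lower triangular, contracting in \<open>z\<close> and expanding
  in \<open>w\<close>; every nearby map then satisfies the hypotheses of \<open>cone_field\<close> on its
  maximal invariant set in \<open>Z\<close>.\<close>
lemma hyp_saddle_near:
  assumes F: "normalized_den D F" and Z: "bounded Z"
    and dx1: "\<And>p. p \<in> Z \<Longrightarrow> a0 \<le> cmod (hev_dx D (P1 F) (fst p) (snd p)) \<and> cmod (hev_dx D (P1 F) (fst p) (snd p)) \<le> a1"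
    and dx2: "\<And>p. p \<in> Z \<Longrightarrow> hev_dx D (P2 F) (fst p) (snd p) = 0"
    and dy2: "\<And>p. p \<in> Z \<Longrightarrow> mF \<le> cmod (hev_dy D (P2 F) (fst p) (snd p))"
    and ineqs: "0 < a0" "a0 \<le> a1" "a1 < 1" "1 < mF"
  shows "\<exists>e>0. \<forall>G. near D F G e \<longrightarrow> hyp_saddle D G (lam D G Z)"
proof -
  obtain R where R: "1 \<le> R" and ZR: "\<And>p. p \<in> Z \<Longrightarrow> cmod (fst p) \<le> R \<and> cmod (snd p) \<le> R"
    using bounded_coords_le[OF Z] by blast
  define B where "B = coeff_weight D (P1 F) R"
  have B: "0 \<le> B" "\<And>p. p \<in> Z \<Longrightarrow> cmod (hev_dy D (P1 F) (fst p) (snd p)) \<le> B"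
    using R hev_bounds(3)[OF R] ZR by (simp_all add: B_def coeff_weight_nonneg)
  obtain \<tau> K where \<tau>K: "0 < \<tau>" "0 < K" "\<tau> \<le> a0 / 4" "(B + \<tau>) * \<tau> \<le> a0 / 4"
      "a1 + \<tau> + (B + \<tau>) / K < 1" "1 < (mF - \<tau>) - \<tau> * K"
    using cone_constants_exist[OF _ _ B(1), of a0 a1 mF] ineqs by blast
  obtain e where e: "e > 0" and close: "\<forall>G p. near D F G e \<and> cmod (fst p) \<le> R \<and> cmod (snd p) \<le> R \<longrightarrow>
      den D G p \<noteq> 0 \<and>
      cmod (aff_dx D G P1 p - hev_dx D (P1 F) (fst p) (snd p)) \<le> \<tau> \<and>
      cmod (aff_dy D G P1 p - hev_dy D (P1 F) (fst p) (snd p)) \<le> \<tau> \<and>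
      cmod (aff_dx D G P2 p - hev_dx D (P2 F) (fst p) (snd p)) \<le> \<tau> \<and>
      cmod (aff_dy D G P2 p - hev_dy D (P2 F) (fst p) (snd p)) \<le> \<tau>"
    using near_aff_partials_close[OF F R \<tau>K(1)] by blast
  show ?thesis
  proof (intro exI[of _ e] conjI allI impI e)
    fix G assume G: "near D F G e"
    have "cone_field D G (lam D G Z) (aff_dx D G P1) (aff_dy D G P1) (aff_dx D G P2) (aff_dy D G P2)
        (a1 + \<tau>) (B + \<tau>) \<tau> K (mF - \<tau>)"
    proof (rule cone_field_of_close_entries)
      fix p assume p: "p \<in> lam D G Z"
      note pZ = lam_memD(1)[OF p]
      note cl = close[rule_format, OF conjI[OF G ZR[OF pZ]]]
      show "aff D G p \<in> lam D G Z \<and> den D G p \<noteq> 0 \<and>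
          Df D G p = (\<lambda>v. (aff_dx D G P1 p * fst v + aff_dy D G P1 p * snd v,
                           aff_dx D G P2 p * fst v + aff_dy D G P2 p * snd v))"
        using lam_memD[OF p] Df_eq_aff_partials by blast
      show "cmod (aff_dx D G P1 p - hev_dx D (P1 F) (fst p) (snd p)) \<le> \<tau> \<and>
          cmod (aff_dy D G P1 p - hev_dy D (P1 F) (fst p) (snd p)) \<le> \<tau> \<and>
          cmod (aff_dx D G P2 p) \<le> \<tau> \<and> cmod (aff_dy D G P2 p - hev_dy D (P2 F) (fst p) (snd p)) \<le> \<tau>"
        using cl dx2[OF pZ] by simp
      show "a0 \<le> cmod (hev_dx D (P1 F) (fst p) (snd p)) \<and> cmod (hev_dx D (P1 F) (fst p) (snd p)) \<le> a1 \<and>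
          cmod (hev_dy D (P1 F) (fst p) (snd p)) \<le> B \<and> mF \<le> cmod (hev_dy D (P2 F) (fst p) (snd p))"
        using dx1[OF pZ] B(2)[OF pZ] dy2[OF pZ] by blast
    qed (use ineqs \<tau>K B in auto)
    then show "hyp_saddle D G (lam D G Z)"
      by (rule cone_field.hyp_saddle)
  qed
qed

section \<open>Skew products close to an affine iterated function system\<close>

lemma cball_not_covered_by_constants:
  assumes "finite J"
  shows "\<not> cball (0::complex) 1 \<subseteq> (\<Union>j\<in>J. (\<lambda>z. 0 * z + c j) ` ball 0 1)"
proof
  assume cover: "cball (0::complex) 1 \<subseteq> (\<Union>j\<in>J. (\<lambda>z. 0 * z + c j) ` ball 0 1)"
  have "(\<lambda>z. 0 * z + c j) ` ball 0 1 \<subseteq> {c j}" for j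
    by auto
  with cover have "cball (0::complex) 1 \<subseteq> c ` J"
    by blast
  moreover have "countable (c ` J)"
    using assms by (simp add: countable_finite)
  ultimately have "countable (cball (0::complex) 1)"
    by (rule countable_subset)
  then show False
    using uncountable_cball[of 1 "0::complex"] by simp
qed

text \<open>By compactness of \<open>{\<rho>. cmod \<rho> = r} \<times> cball 0 1\<close>, a covering of the closed disc by the
  three images of the open disc has a uniform margin \<open>\<mu>\<close>.\<close>
lemma cover_margin:
  fixes c :: "nat \<Rightarrow> complex"
  assumes r: "0 < r"
    and cover: "\<And>\<rho>. cmod \<rho> = r \<Longrightarrow> cball 0 1 \<subseteq> (\<Union>j\<in>{1,2,3}. (\<lambda>z. \<rho> * z + c j) ` ball 0 1)"
  shows "\<exists>\<mu>>0. \<forall>\<rho> z'. cmod \<rho> = r \<and> cmod z' \<le> 1 \<longrightarrow> (\<exists>j\<in>{1,2,3}. cmod ((z' - c j) / \<rho>) + \<mu> < 1)"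
proof -
  define S where "S = sphere (0::complex) r \<times> cball (0::complex) 1"
  define g where "g j p = cmod ((snd p - c j) / fst p)" for j and p :: "complex \<times> complex"
  define \<Phi> where "\<Phi> p = min (min (g 1 p) (g 2 p)) (g 3 p)" for p
  have S: "compact S" "S \<noteq> {}"
    using r by (auto simp: S_def intro!: compact_Times exI[of _ "complex_of_real r"])
  have "continuous_on S \<Phi>"
    unfolding \<Phi>_def g_def using r by (intro continuous_intros) (auto simp: S_def)
  then obtain x where x: "x \<in> S" "\<forall>y\<in>S. \<Phi> y \<le> \<Phi> x"
    using continuous_attains_sup[OF S] by blast
  have \<Phi>_less_1: "\<Phi> p < 1" if "p \<in> S" for p
  proof -
    have "cmod (fst p) = r" "snd p \<in> cball 0 1"
      using that by (auto simp: S_def)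
    then obtain j \<zeta> where j: "j \<in> {1,2,3}" "\<zeta> \<in> ball 0 1" "snd p = fst p * \<zeta> + c j"
      using cover by blast
    then have "g j p < 1"
      using r \<open>cmod (fst p) = r\<close> by (auto simp: g_def)
    with j(1) show ?thesis
      unfolding \<Phi>_def by (auto simp: min_less_iff_disj)
  qed
  define \<mu> where "\<mu> = (1 - \<Phi> x) / 2"
  have \<mu>: "0 < \<mu>" "\<Phi> x + \<mu> < 1"
    using \<Phi>_less_1[OF x(1)] by (simp_all add: \<mu>_def field_simps)
  show ?thesis
  proof (intro exI[of _ \<mu>] conjI allI impI \<mu>(1))
    fix \<rho> z' :: complex assume "cmod \<rho> = r \<and> cmod z' \<le> 1"
    then have "(\<rho>, z') \<in> S"
      by (simp add: S_def)
    then have "\<Phi> (\<rho>, z') + \<mu> < 1"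
      using x(2) \<mu>(2) by fastforce
    then have "g 1 (\<rho>, z') + \<mu> < 1 \<or> g 2 (\<rho>, z') + \<mu> < 1 \<or> g 3 (\<rho>, z') + \<mu> < 1"
      unfolding \<Phi>_def by linarith
    then show "\<exists>j\<in>{1,2,3}. cmod ((z' - c j) / \<rho>) + \<mu> < 1"
      by (auto simp: g_def)
  qed
qed

lemma IFS_margin:
  fixes c :: "nat \<Rightarrow> complex"
  assumes \<alpha>: "0 < \<alpha>"
    and IFS: "\<forall>\<rho>::complex. 1 - \<alpha> \<le> cmod \<rho> \<and> cmod \<rho> \<le> 1 + \<alpha> \<longrightarrow>
      cball 0 1 \<subseteq> (\<Union>j\<in>{1,2,3}. (\<lambda>z. \<rho> * z + c j) ` ball 0 1) \<and> P \<rho>"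
  shows "\<alpha> < 1"
    and "\<exists>\<mu>>0. \<forall>\<rho> z'. cmod \<rho> = 1 - \<alpha> \<and> cmod z' \<le> 1 \<longrightarrow> (\<exists>j\<in>{1,2,3}. cmod ((z' - c j) / \<rho>) + \<mu> < 1)"
proof -
  have cover: "cball 0 1 \<subseteq> (\<Union>j\<in>{1,2,3}. (\<lambda>z. \<rho> * z + c j) ` ball 0 1)"
    if "1 - \<alpha> \<le> cmod \<rho>" "cmod \<rho> \<le> 1 + \<alpha>" for \<rho> :: complex
    using IFS[rule_format, OF conjI[OF that]] by (rule conjunct1)
  show "\<alpha> < 1"
  proof (rule ccontr)
    assume "\<not> \<alpha> < 1"
    then have "cball 0 1 \<subseteq> (\<Union>j\<in>{1,2,3}. (\<lambda>z. 0 * z + c j) ` ball 0 1)"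
      using \<alpha> by (intro cover) auto
    then show False
      using cball_not_covered_by_constants[of "{1,2,3}" c] by simp
  qed
  then show "\<exists>\<mu>>0. \<forall>\<rho> z'. cmod \<rho> = 1 - \<alpha> \<and> cmod z' \<le> 1 \<longrightarrow> (\<exists>j\<in>{1,2,3}. cmod ((z' - c j) / \<rho>) + \<mu> < 1)"
    using \<alpha> by (intro cover_margin cover) auto
qed

text \<open>Cauchy's estimate for \<open>H - (\<rho> z + c0)\<close> on discs of radius \<open>1/2\<close> around the points of
  the closed unit disc.\<close>
lemma deriv_close_of_close:
  assumes H: "\<And>z. (H has_field_derivative H' z) (at z)"
    and close: "\<forall>z\<in>ball 0 2. cmod (H z - (\<rho> * z + c0)) \<le> \<delta>" and z: "cmod z \<le> 1"
  shows "cmod (H' z - \<rho>) \<le> 2 * \<delta>"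
proof -
  define g where "g \<zeta> = H \<zeta> - (\<rho> * \<zeta> + c0)" for \<zeta>
  have dg: "(g has_field_derivative (H' \<zeta> - \<rho>)) (at \<zeta>)" for \<zeta>
    unfolding g_def by (auto intro!: derivative_eq_intros H)
  then have hol: "g holomorphic_on S" for S
    unfolding holomorphic_on_def field_differentiable_def using has_field_derivative_at_within by blast
  have "norm ((deriv ^^ 1) g z) \<le> fact 1 * \<delta> / (1/2) ^ 1"
  proof (rule Cauchy_inequality[OF hol holomorphic_on_imp_continuous_on[OF hol]])
    fix x assume "norm (z - x) = 1/2"
    then have "x \<in> ball 0 2"
      using z norm_triangle_ineq2[of x z] by (simp add: norm_minus_commute)
    then show "norm (g x) \<le> \<delta>"
      using close by (simp add: g_def)
  qed simp
  moreover have "deriv g z = H' z - \<rho>"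
    by (rule DERIV_imp_deriv[OF dg])
  ultimately show ?thesis
    by simp
qed

text \<open>Brouwer's fixed point theorem applied to \<open>z \<mapsto> z + (z' - H z) / \<rho>\<close> on a disc around
  the preimage of \<open>z'\<close> under the affine map.\<close>
lemma affine_perturbation_hits:
  fixes H :: "complex \<Rightarrow> complex"
  assumes \<rho>: "\<rho> \<noteq> 0" and r: "0 < r" and z': "cmod ((z' - c0) / \<rho>) + r < 1" and \<delta>: "\<delta> \<le> r * cmod \<rho>"
    and H: "continuous_on UNIV H" and close: "\<forall>z\<in>ball 0 2. cmod (H z - (\<rho> * z + c0)) \<le> \<delta>"
  shows "\<exists>z\<in>ball 0 1. H z = z'"
proof -
  define z0 where "z0 = (z' - c0) / \<rho>"
  define g where "g z = z + (z' - H z) / \<rho>" for z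
  have sub: "cball z0 r \<subseteq> ball 0 1"
  proof
    fix z assume "z \<in> cball z0 r"
    then have "cmod z \<le> cmod z0 + r"
      using norm_triangle_ineq2[of z z0] by (simp add: dist_norm norm_minus_commute)
    then show "z \<in> ball 0 1"
      using z' by (simp add: z0_def)
  qed
  have "continuous_on (cball z0 r) g"
    unfolding g_def using \<rho> by (intro continuous_intros continuous_on_subset[OF H]) auto
  moreover have "g \<in> cball z0 r \<rightarrow> cball z0 r"
  proof
    fix z assume "z \<in> cball z0 r"
    then have "cmod (H z - (\<rho> * z + c0)) \<le> \<delta>"
      using sub close by auto
    moreover have "g z - z0 = - (H z - (\<rho> * z + c0)) / \<rho>"
      using \<rho> unfolding g_def z0_def by (simp add: field_simps)
    ultimately have "cmod (g z - z0) \<le> \<delta> / cmod \<rho>"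
      using \<rho> by (simp add: norm_divide norm_minus_commute divide_right_mono)
    also have "\<dots> \<le> r"
      using \<delta> \<rho> by (simp add: field_simps)
    finally show "g z \<in> cball z0 r"
      by (simp add: dist_norm norm_minus_commute)
  qed
  ultimately obtain z where "z \<in> cball z0 r" "g z = z"
    using brouwer_ball[OF r] by blast
  then show ?thesis
    using \<rho> sub by (intro bexI[of _ z]) (auto simp: g_def)
qed

locale skew_near_affine =
  fixes D :: nat and F :: hmap and Q :: "complex \<Rightarrow> complex" and V :: "nat \<Rightarrow> complex set"
    and \<rho> :: complex and c :: "nat \<Rightarrow> complex" and \<delta> :: real
  assumes den_normalized: "normalized_den D F"
    and second_coord: "\<And>z w. hev D (P2 F) z w 1 = Q w"
    and first_coord_close: "\<And>j z w. j \<in> {1,2,3} \<Longrightarrow> z \<in> ball 0 2 \<Longrightarrow> w \<in> V j \<Longrightarrow>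
          cmod (hev D (P1 F) z w 1 - (\<rho> * z + c j)) \<le> \<delta>"
begin

definition Z :: "pt set" where
  "Z = (\<Union>i\<in>{1,2,3}. ball 0 1 \<times> V i)"

lemma closure_Z: "closure Z = (\<Union>i\<in>{1,2,3}. cball 0 1 \<times> closure (V i))"
  by (simp add: Z_def closure_Times)

lemma mem_closure_Z: "p \<in> closure Z \<Longrightarrow> \<exists>j\<in>{1,2,3}. cmod (fst p) \<le> 1 \<and> snd p \<in> closure (V j)"
  using closure_Z by (cases p) auto

lemma den_eq_1: "den D F p = 1"
  using normalized_den_hev(1)[OF den_normalized] by (simp add: den_def)

lemma aff_eq: "aff D F p = (hev D (P1 F) (fst p) (snd p) 1, Q (snd p))"
  by (simp add: aff_def den_eq_1 second_coord)

lemma closure_Z_subset_image: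
  assumes \<rho>: "\<rho> \<noteq> 0" and \<mu>: "0 < \<mu>" "\<delta> \<le> \<mu> / 2 * cmod \<rho>"
    and margin: "\<And>z'. cmod z' \<le> 1 \<Longrightarrow> \<exists>j\<in>{1,2,3}. cmod ((z' - c j) / \<rho>) + \<mu> < 1"
    and Q_onto: "\<And>i. i \<in> {1,2,3} \<Longrightarrow> closure (\<Union>j\<in>{1,2,3}. V j) \<subseteq> Q ` V i"
  shows "closure Z \<subseteq> aff D F ` {p \<in> Z. den D F p \<noteq> 0}"
proof
  fix p assume "p \<in> closure Z"
  then obtain j where j: "j \<in> {1,2,3}" "cmod (fst p) \<le> 1" "snd p \<in> closure (V j)"
    using mem_closure_Z by blast
  obtain i where i: "i \<in> {1,2,3}" "cmod ((fst p - c i) / \<rho>) + \<mu> < 1"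
    using margin[OF j(2)] by blast
  have "V j \<subseteq> (\<Union>j\<in>{1,2,3}. V j)"
    by (rule UN_upper[OF j(1)])
  then have "closure (V j) \<subseteq> closure (\<Union>j\<in>{1,2,3}. V j)"
    by (rule closure_mono)
  then have "snd p \<in> closure (\<Union>j\<in>{1,2,3}. V j)"
    using j(3) by blast
  then have "snd p \<in> Q ` V i"
    by (rule subsetD[OF Q_onto[OF i(1)]])
  then obtain w where w: "w \<in> V i" "Q w = snd p"
    by (metis imageE)
  have "\<exists>z\<in>ball 0 1. hev D (P1 F) z w 1 = fst p"
  proof (rule affine_perturbation_hits[OF \<rho>, of "\<mu> / 2"])
    show "0 < \<mu> / 2" "cmod ((fst p - c i) / \<rho>) + \<mu> / 2 < 1" "\<delta> \<le> \<mu> / 2 * cmod \<rho>"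
      using i \<mu> by simp_all
    show "continuous_on UNIV (\<lambda>z. hev D (P1 F) z w 1)"
      unfolding hev_at_1 by (intro continuous_intros)
    show "\<forall>z\<in>ball 0 2. cmod (hev D (P1 F) z w 1 - (\<rho> * z + c i)) \<le> \<delta>"
      using first_coord_close i(1) w(1) by blast
  qed
  then obtain z where z: "z \<in> ball 0 1" "hev D (P1 F) z w 1 = fst p"
    by blast
  have "(z, w) \<in> Z"
    using z(1) w(1) i(1) unfolding Z_def by blast
  moreover have "p = aff D F (z, w)"
    using z(2) w(2) by (simp add: aff_eq prod_eq_iff)
  ultimately show "p \<in> aff D F ` {p \<in> Z. den D F p \<noteq> 0}"
    by (intro image_eqI[of _ _ "(z, w)"]) (simp_all add: den_eq_1)
qed

lemma hev_dx_P1_close: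
  assumes "p \<in> closure Z"
  shows "cmod (hev_dx D (P1 F) (fst p) (snd p) - \<rho>) \<le> 2 * \<delta>"
proof -
  obtain j where j: "j \<in> {1,2,3}" "cmod (fst p) \<le> 1" "snd p \<in> closure (V j)"
    using mem_closure_Z[OF assms] by blast
  have "\<forall>z\<in>ball 0 2. cmod (hev D (P1 F) z (snd p) 1 - (\<rho> * z + c j)) \<le> \<delta>"
  proof
    fix z :: complex assume z: "z \<in> ball 0 2"
    have "continuous_on (closure (V j)) (\<lambda>w. cmod (hev D (P1 F) z w 1 - (\<rho> * z + c j)))"
      unfolding hev_at_1 by (intro continuous_intros)
    then show "cmod (hev D (P1 F) z (snd p) 1 - (\<rho> * z + c j)) \<le> \<delta>"
      by (rule continuous_le_on_closure[OF _ j(3)]) (rule first_coord_close[OF j(1) z])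
  qed
  then show ?thesis
    by (rule deriv_close_of_close[OF hev_has_field_derivative_x _ j(2)])
qed

lemma hev_dx_P2_eq_0: "hev_dx D (P2 F) x y = 0"
proof -
  have "((\<lambda>x. hev D (P2 F) x y 1) has_field_derivative 0) (at x)"
    by (simp add: second_coord)
  then show ?thesis
    using hev_has_field_derivative_x DERIV_unique by blast
qed

lemma hev_dy_P2_eq_deriv: "hev_dy D (P2 F) x y = deriv Q y"
proof -
  have "(Q has_field_derivative hev_dy D (P2 F) x y) (at y)"
    using hev_has_field_derivative_y[of D "P2 F" x y] by (simp add: second_coord)
  then show ?thesis
    by (rule DERIV_imp_deriv[symmetric])
qed

lemma hev_dy_P2_lower:
  assumes expand: "\<And>j w. j \<in> {1,2,3} \<Longrightarrow> w \<in> V j \<Longrightarrow> m \<le> cmod (deriv Q w)" and p: "p \<in> closure Z"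
  shows "m \<le> cmod (hev_dy D (P2 F) (fst p) (snd p))"
proof -
  obtain j where j: "j \<in> {1,2,3}" "snd p \<in> closure (V j)"
    using mem_closure_Z[OF p] by blast
  have "continuous_on (closure (V j)) (\<lambda>w. cmod (hev_dy D (P2 F) (fst p) w))"
    unfolding hev_dy_def by (intro continuous_intros)
  then show ?thesis
    by (rule continuous_ge_on_closure[OF _ j(2)]) (simp add: hev_dy_P2_eq_deriv expand[OF j(1)])
qed

theorem blender_saddle_Z:
  assumes inH: "inH D F" and V: "\<forall>i\<in>{1,2,3}. open (V i) \<and> bounded (V i)"
    and \<rho>: "cmod \<rho> = 1 - \<alpha>" "0 < \<alpha>" "\<alpha> < 1"
    and \<delta>: "0 \<le> \<delta>" "\<delta> \<le> \<alpha> / 8" "\<delta> \<le> (1 - \<alpha>) / 4" "\<delta> \<le> \<mu> / 2 * cmod \<rho>" and \<mu>: "0 < \<mu>"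
    and margin: "\<And>z'. cmod z' \<le> 1 \<Longrightarrow> \<exists>j\<in>{1,2,3}. cmod ((z' - c j) / \<rho>) + \<mu> < 1"
    and Q: "\<forall>i\<in>{1,2,3}. \<exists>m>1. (\<forall>w\<in>V i. m \<le> cmod (deriv Q w)) \<and> closure (\<Union>j\<in>{1,2,3}. V j) \<subseteq> Q ` V i"
  shows "blender_saddle D F Z"
  unfolding blender_saddle_def
proof (intro conjI inH)
  show "open Z"
    unfolding Z_def using V by (intro open_UN ballI open_Times open_ball) auto
  obtain m where m: "\<forall>i\<in>{1,2,3}. 1 < m i \<and> (\<forall>w\<in>V i. m i \<le> cmod (deriv Q w)) \<and>
      closure (\<Union>j\<in>{1,2,3}. V j) \<subseteq> Q ` V i"
    using bchoice[OF Q] by blast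
  have Q_onto: "closure (\<Union>j\<in>{1,2,3}. V j) \<subseteq> Q ` V i" if "i \<in> {1,2,3}" for i
    using m that by blast
  have "\<rho> \<noteq> 0"
    using \<rho> by auto
  then show "closure Z \<subseteq> aff D F ` {p \<in> Z. den D F p \<noteq> 0}"
    by (rule closure_Z_subset_image[OF _ \<mu> \<delta>(4) margin Q_onto])
  define m_min where "m_min = min (m 1) (min (m 2) (m 3))"
  have m_min: "1 < m_min"
    using m by (simp add: m_min_def)
  have expand: "m_min \<le> cmod (deriv Q w)" if "j \<in> {1,2,3}" "w \<in> V j" for j w
  proof -
    have "m_min \<le> m j"
      using that(1) by (auto simp: m_min_def)
    also have "\<dots> \<le> cmod (deriv Q w)"
      using m that by blast
    finally show ?thesis .
  qed
  have bounded: "bounded (closure Z)"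
    unfolding closure_Z using V by (intro bounded_UN ballI bounded_Times bounded_cball bounded_closure) auto
  have dx1: "1 - \<alpha> - 2 * \<delta> \<le> cmod (hev_dx D (P1 F) (fst p) (snd p)) \<and>
      cmod (hev_dx D (P1 F) (fst p) (snd p)) \<le> 1 - \<alpha> + 2 * \<delta>" if "p \<in> closure Z" for p
    using hev_dx_P1_close[OF that] \<rho> norm_triangle_ineq2[of "hev_dx D (P1 F) (fst p) (snd p)" \<rho>]
      norm_triangle_ineq2[of \<rho> "hev_dx D (P1 F) (fst p) (snd p)"] by (simp add: norm_minus_commute)
  have "\<exists>e>0. \<forall>G. near D F G e \<longrightarrow> hyp_saddle D G (lam D G (closure Z))"
    by (rule hyp_saddle_near[OF den_normalized bounded dx1 hev_dx_P2_eq_0 hev_dy_P2_lower[OF expand]])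
      (use \<rho> \<delta> m_min in \<open>auto simp: field_simps\<close>)
  then show "\<exists>e>0. \<forall>G. inH D G \<and> near D F G e \<longrightarrow> hyp_saddle D G (lam D G (closure Z))"
    by blast
qed

end

lemma blender_saddle_skew_product:
  fixes Q :: "complex \<Rightarrow> complex" and V :: "nat \<Rightarrow> complex set" and c :: "nat \<Rightarrow> complex"
  assumes \<alpha>: "0 < \<alpha>" "\<alpha> < 1" and \<mu>: "0 < \<mu>"
    and margin: "\<forall>\<rho> z'. cmod \<rho> = 1 - \<alpha> \<and> cmod z' \<le> 1 \<longrightarrow> (\<exists>j\<in>{1,2,3}. cmod ((z' - c j) / \<rho>) + \<mu> < 1)"
    and \<delta>: "0 < \<delta>" "\<delta> \<le> \<alpha> / 8" "\<delta> \<le> (1 - \<alpha>) / 4" "\<delta> \<le> \<mu> * (1 - \<alpha>) / 2"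
    and V: "\<forall>i\<in>{1,2,3}. open (V i) \<and> bounded (V i)"
    and Q: "\<forall>i\<in>{1,2,3}. \<exists>m>1. (\<forall>w\<in>V i. m \<le> cmod (deriv Q w)) \<and> closure (\<Union>j\<in>{1,2,3}. V j) \<subseteq> Q ` V i"
  shows "cmod \<rho> = 1 - \<alpha> \<and> inH D F \<and> (\<forall>i j. i + j \<le> D \<longrightarrow> P3 F (i, j) = (if (i, j) = (0, 0) then 1 else 0)) \<and>
      (\<forall>z w. hev D (P2 F) z w 1 = Q w) \<and>
      (\<forall>j\<in>{1,2,3}. \<forall>z\<in>ball 0 2. \<forall>w\<in>V j. cmod (hev D (P1 F) z w 1 - (\<rho> * z + c j)) \<le> \<delta>) \<longrightarrow>
      blender_saddle D F (\<Union>i\<in>{1,2,3}. ball 0 1 \<times> V i)"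
proof
  assume H: "cmod \<rho> = 1 - \<alpha> \<and> inH D F \<and> (\<forall>i j. i + j \<le> D \<longrightarrow> P3 F (i, j) = (if (i, j) = (0, 0) then 1 else 0)) \<and>
      (\<forall>z w. hev D (P2 F) z w 1 = Q w) \<and>
      (\<forall>j\<in>{1,2,3}. \<forall>z\<in>ball 0 2. \<forall>w\<in>V j. cmod (hev D (P1 F) z w 1 - (\<rho> * z + c j)) \<le> \<delta>)"
  interpret skew_near_affine D F Q V \<rho> c \<delta>
    using H by unfold_locales (auto simp: normalized_den_def)
  have "blender_saddle D F Z"
  proof (rule blender_saddle_Z[OF _ V _ \<alpha> _ _ _ _ \<mu> _ Q])
    show "inH D F" "cmod \<rho> = 1 - \<alpha>"
      using H by blast+
    show "0 \<le> \<delta>" "\<delta> \<le> \<alpha> / 8" "\<delta> \<le> (1 - \<alpha>) / 4" "\<delta> \<le> \<mu> / 2 * cmod \<rho>"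
      using \<delta> H by simp_all
    show "\<exists>j\<in>{1,2,3}. cmod ((z' - c j) / \<rho>) + \<mu> < 1" if "cmod z' \<le> 1" for z'
      using margin H that by blast
  qed
  then show "blender_saddle D F (\<Union>i\<in>{1,2,3}. ball 0 1 \<times> V i)"
    by (simp add: Z_def)
qed

theorem proposition3p7:
  fixes q :: "complex poly" and m1 :: nat
    and r chi c :: "nat \<Rightarrow> complex" and V :: "nat \<Rightarrow> nat \<Rightarrow> complex set"
    and eps0 alpha0 :: real
  assumes deg: "degree q \<ge> 2"
    and m1: "m1 \<ge> 1"
    and r_distinct: "r 1 \<noteq> r 2" "r 1 \<noteq> r 3" "r 2 \<noteq> r 3"
    and r_per: "\<forall>i\<in>{1,2,3}. (poly q ^^ m1) (r i) = r i \<and>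
                   (\<forall>k. 0 < k \<and> k < m1 \<longrightarrow> (poly q ^^ k) (r i) \<noteq> r i)"
    and chi: "\<forall>i\<in>{1,2,3}. chi i = deriv (poly q ^^ m1) (r i)"
    and repelling: "\<forall>i\<in>{1,2,3}. cmod (chi i) > 1"
    and not_pc: "\<forall>i\<in>{1,2,3}. r i \<notin> postcritical q"
    and V_basic: "\<forall>i\<in>{1,2,3}. \<forall>l. open (V i l) \<and> connected (V i l) \<and> bounded (V i l)
                    \<and> r i \<in> V i l \<and> bij_betw (poly q ^^ m1) (V i (Suc l)) (V i l)"
    and V_diam: "\<exists>K \<theta>. 0 < \<theta> \<and> \<theta> < 1 \<and> (\<forall>i\<in>{1,2,3}. \<forall>l. diameter (V i l) \<le> K * \<theta> ^ l)"
    and V_large: "\<exists>A>0. \<exists>L. \<forall>l\<ge>L. \<forall>i\<in>{1,2,3}.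
                    A * cmod (chi i) ^ l > 1 \<and>
                    (\<forall>z\<in>V i l. cmod (deriv (poly q ^^ (l * m1)) z) \<ge> A * cmod (chi i) ^ l) \<and>
                    closure (\<Union>j\<in>{1,2,3}. V j l) \<subseteq> (poly q ^^ (l * m1)) ` V i l \<and>
                    (\<forall>j\<in>{1,2,3}. bij_betw (poly q ^^ (l * m1))
                        (V i l \<inter> (poly q ^^ (l * m1)) -` V j l) (V j l))"
    and c_nonaligned: "\<not> collinear {c 1, c 2, c 3}"
    and c_sum: "c 1 + c 2 + c 3 = 0"
    and eps0: "eps0 > 0" and alpha0: "alpha0 > 0"
    and IFS: "\<forall>\<rho>::complex. 1 - alpha0 \<le> cmod \<rho> \<and> cmod \<rho> \<le> 1 + alpha0 \<longrightarrow>
                cball 0 1 \<subseteq> (\<Union>j\<in>{1,2,3}. (\<lambda>z. \<rho> * z + eps0 * c j) ` ball 0 1) \<and>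
                (\<exists>H :: nat \<Rightarrow> complex set. (\<forall>j\<in>{1,2,3}. open (H j)) \<and>
                   ball 0 1 = (\<Union>j\<in>{1,2,3}. H j) \<and>
                   (\<forall>j\<in>{1,2,3}. closure ((\<lambda>z. \<rho> * z + eps0 * c j) ` H j) \<subseteq> ball 0 1) \<and>
                   (\<forall>j\<in>{1,2,3}. closure ((\<lambda>z. \<rho> * z + eps0 * c j) ` ((\<lambda>z. z / 3) ` H j))
                                   \<subseteq> ball 0 (1/3)))"
  shows "\<exists>l0 \<ge> 1. \<exists>\<delta>0 > 0. \<forall>l \<ge> l0. \<forall>\<rho>::complex. \<forall>D F.
           cmod \<rho> = 1 - alpha0 \<and> inH D F \<and>
           (\<forall>i j. i + j \<le> D \<longrightarrow> P3 F (i,j) = (if (i,j) = (0,0) then 1 else 0)) \<and>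
           (\<forall>z w. hev D (P2 F) z w 1 = (poly q ^^ (m1 * l)) w) \<and>
           (\<forall>j\<in>{1,2,3}. \<forall>z\<in>ball 0 2. \<forall>w\<in>V j l.
               cmod (hev D (P1 F) z w 1 - (\<rho> * z + eps0 * c j)) \<le> \<delta>0)
           \<longrightarrow> blender_saddle D F (\<Union>i\<in>{1,2,3}. ball 0 1 \<times> V i l)"
proof -
  obtain \<mu> where \<mu>: "0 < \<mu>" and margin: "\<forall>\<rho> z'. cmod \<rho> = 1 - alpha0 \<and> cmod z' \<le> 1 \<longrightarrow>
      (\<exists>j\<in>{1,2,3}. cmod ((z' - eps0 * c j) / \<rho>) + \<mu> < 1)"
    using IFS_margin(2)[OF alpha0 IFS] by blast
  note alpha0_lt_1 = IFS_margin(1)[OF alpha0 IFS]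
  obtain A L where AL: "\<forall>l\<ge>L. \<forall>i\<in>{1,2,3}. A * cmod (chi i) ^ l > 1 \<and>
      (\<forall>z\<in>V i l. cmod (deriv (poly q ^^ (l * m1)) z) \<ge> A * cmod (chi i) ^ l) \<and>
      closure (\<Union>j\<in>{1,2,3}. V j l) \<subseteq> (poly q ^^ (l * m1)) ` V i l"
    using V_large by blast
  define \<delta>0 where "\<delta>0 = min (alpha0 / 8) (min ((1 - alpha0) / 4) (\<mu> * (1 - alpha0) / 2))"
  have "\<delta>0 \<le> alpha0 / 8" "\<delta>0 \<le> (1 - alpha0) / 4" "\<delta>0 \<le> \<mu> * (1 - alpha0) / 2"
    unfolding \<delta>0_def by (simp_all only: min_le_iff_disj order_refl simp_thms)
  moreover have "0 < \<delta>0"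
    using alpha0 alpha0_lt_1 \<mu> by (simp add: \<delta>0_def)
  moreover have "\<forall>i\<in>{1,2,3}. \<exists>m>1. (\<forall>w\<in>V i l. m \<le> cmod (deriv (poly q ^^ (m1 * l)) w)) \<and>
      closure (\<Union>j\<in>{1,2,3}. V j l) \<subseteq> (poly q ^^ (m1 * l)) ` V i l" if "L \<le> l" for l
    using AL that by (auto simp: mult.commute)
  ultimately show ?thesis
    using alpha0 alpha0_lt_1 \<mu> margin V_basic
    by (intro exI[of _ "max 1 L"] exI[of _ \<delta>0] conjI allI impI[of "max 1 L \<le> _"] blender_saddle_skew_product) auto
qed

end
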